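(* Let $V_0$ be a type A $\mathcal U_q(gl(2))$-module with parameters $(N,\omega,\lambda_2)$ and $M'$ the associated induced module, and suppose $[\mu_2][N+\mu_2]=0$ (equivalently all $\mathcal C_p$ act as $0$ on $M'$). Then $M'$ has a maximal proper submodule $M''$, and $M=M'/M''$ is a simple $\mathcal U_q(sl(2|1))$-module with (i) $\dim M=2N-1$ if $[\mu_2]=0$ and $[N+\mu_2]\ne0$; (ii) $\dim M=2N+1$ if $[\mu_2]\ne0$ and $[N+\mu_2]=0$; (iii) $\dim M=2l'-1$ if $[\mu_2]=0$ and $[N+\mu_2]=0$ (which forces $N=l'$).
   Context: $q\in\mathbb C$ is a root of unity with $q^2\ne1$, $l$ the smallest positive integer with $q^l=1$, $l'=l$ if $l$ odd, $l'=l/2$ if $l$ even. $[x]=(q^x-q^{-x})/(q-q^{-1})$; for $\lambda_i\in\mathbb C^*$, $[\mu_i+a]$ means $(q^a\lambda_i-q^{-a}\lambda_i^{-1})/(q-q^{-1})$ (formally $q^{\mu_i}=\lambda_i$). $\mathcal U_q(sl(2|1))$ is the $\mathbb Z_2$-graded algebra generated by $k_1^{\pm1},k_2^{\pm1},e_1,e_2,f_1,f_2$ ($e_2,f_2$ odd) with relations $k_ik_i^{-1}=1$, $k_1k_2=k_2k_1$, $k_ie_jk_i^{-1}=q^{a_{ij}}e_j$, $k_if_jk_i^{-1}=q^{-a_{ij}}f_j$ ($a_{11}=2,a_{12}=a_{21}=-1,a_{22}=0$), $[e_1,f_1]=\frac{k_1-k_1^{-1}}{q-q^{-1}}$, $e_2f_2+f_2e_2=\frac{k_2-k_2^{-1}}{q-q^{-1}}$,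 $[e_1,f_2]=[e_2,f_1]=0$, $e_2^2=f_2^2=0$, $e_1^2e_2-(q+q^{-1})e_1e_2e_1+e_2e_1^2=0$, $f_1^2f_2-(q+q^{-1})f_1f_2f_1+f_2f_1^2=0$. $\mathcal U_q(gl(2))$ is the subalgebra generated by $e_1,f_1,k_1^{\pm1},k_2^{\pm1}$; $\mathcal U_q(\mathfrak g_+)$ the subalgebra generated by these and $e_2$. A type A $\mathcal U_q(gl(2))$-module with parameters $N\in\{1,\dots,l'\}$, $\omega\in\{\pm1\}$, $\lambda_2\in\mathbb C^*$ is $V_0$ with basis $v_0,\dots,v_{N-1}$, $\lambda_1=\omega q^{N-1}$, $k_1v_p=\lambda_1q^{-2p}v_p$, $k_2v_p=\lambda_2q^pv_p$, $f_1v_p=v_{p+1}$ ($p\le N-2$), $f_1v_{N-1}=0$, $e_1v_p=[p][\mu_1-p+1]v_{p-1}$. The induced module is $M'=\mathcal U_q(sl(2|1))\otimes_{\mathcal U_q(\mathfrak g_+)}V_0$ with $e_2V_0=0$. The $\mathcal C_p$ are the central elements $\mathcal C_p=k_1^{2p-1}k_2^{4p-2}(q-q^{-1})^2\{[h_1+h_2+1][h_2]-f_1e_1+f_2e_2([h_1+h_2]q^{1-2p}-[h_1+h_2+1])+f_3e_3([h_2-2]q^{1-2p}-[h_2-1])+(q-q^{-1})q^{-1-p}[p]f_3e_2e_1k_2+(q-q^{-1})q^{2-p}[p-1]f_1f_2e_3k_2^{-1}+(q-q^{-1})^2q^{1-2p}[p][p-1]f_2f_3e_3e_2\}$, where $e_3=e_1e_2-q^{-1}e_2e_1$,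 $f_3=f_2f_1-qf_1f_2$, $[h_2+a]=\frac{q^ak_2-q^{-a}k_2^{-1}}{q-q^{-1}}$, $[h_1+h_2+a]=\frac{q^ak_1k_2-q^{-a}k_1^{-1}k_2^{-1}}{q-q^{-1}}$. *)

theory Defs
  imports Complex_Main "Jordan_Normal_Form.Matrix"
begin

definition qpow :: "complex \<Rightarrow> int \<Rightarrow> complex" where
  "qpow q a = (if 0 \<le> a then q ^ nat a else inverse q ^ nat (- a))"

(* [mu + a] := (q^a lam - q^-a lam^-1)/(q - q^-1), where q^mu = lam.
   With lam = 1 this is the ordinary q-integer [a]. *)
definition qbr :: "complex \<Rightarrow> complex \<Rightarrow> int \<Rightarrow> complex" where
  "qbr q lam a = (qpow q a * lam - qpow q (- a) * inverse lam) / (q - inverse q)"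

definition ordq :: "complex \<Rightarrow> nat" where
  "ordq q = (LEAST n. 0 < n \<and> q ^ n = 1)"

definition lprime :: "complex \<Rightarrow> nat" where
  "lprime q = (if odd (ordq q) then ordq q else ordq q div 2)"

(* generators of U_q(sl(2|1)); K1i, K2i stand for k1^-1, k2^-1 *)
datatype gen = K1 | K1i | K2 | K2i | E1 | E2 | F1 | F2

definition gplus_gens :: "gen set" where
  "gplus_gens = {K1, K1i, K2, K2i, E1, F1, E2}"

definition cartan :: "nat \<Rightarrow> nat \<Rightarrow> int" where
  "cartan i j = (if i = 1 \<and> j = 1 then 2 else if i = 2 \<and> j = 2 then 0 else -1)"

definition is_rep :: "complex \<Rightarrow> nat \<Rightarrow> (gen \<Rightarrow> complex mat) \<Rightarrow> bool" where
  "is_rep q d r \<longleftrightarrow>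
     (\<forall>g. r g \<in> carrier_mat d d) \<and>
     r K1 * r K1i = 1\<^sub>m d \<and> r K1i * r K1 = 1\<^sub>m d \<and>
     r K2 * r K2i = 1\<^sub>m d \<and> r K2i * r K2 = 1\<^sub>m d \<and>
     r K1 * r K2 = r K2 * r K1 \<and>
     (\<forall>i\<in>{1::nat,2}. \<forall>j\<in>{1::nat,2}.
        (let Ki = (if i = 1 then r K1 else r K2);
             Kii = (if i = 1 then r K1i else r K2i);
             Ej = (if j = 1 then r E1 else r E2);
             Fj = (if j = 1 then r F1 else r F2) in
          Ki * Ej * Kii = qpow q (cartan i j) \<cdot>\<^sub>m Ej \<and>
          Ki * Fj * Kii = qpow q (- cartan i j) \<cdot>\<^sub>m Fj)) \<and>
     r E1 * r F1 - r F1 * r E1 = (1 / (q - inverse q)) \<cdot>\<^sub>m (r K1 - r K1i) \<and>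
     r E2 * r F2 + r F2 * r E2 = (1 / (q - inverse q)) \<cdot>\<^sub>m (r K2 - r K2i) \<and>
     r E1 * r F2 = r F2 * r E1 \<and>
     r E2 * r F1 = r F1 * r E2 \<and>
     r E2 * r E2 = 0\<^sub>m d d \<and> r F2 * r F2 = 0\<^sub>m d d \<and>
     r E1 * r E1 * r E2 - (q + inverse q) \<cdot>\<^sub>m (r E1 * r E2 * r E1) + r E2 * r E1 * r E1
        = 0\<^sub>m d d \<and>
     r F1 * r F1 * r F2 - (q + inverse q) \<cdot>\<^sub>m (r F1 * r F2 * r F1) + r F2 * r F1 * r F1
        = 0\<^sub>m d d"

(* The type A U_q(gl(2))-module V_0 with parameters (N, omega, lam2), regarded as a
   U_q(g_+)-module with e_2 acting by 0 (f_2 is not in g_+; its entry is irrelevant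
   and set to 0).  Column p of each matrix is the image of the basis vector v_p. *)
definition typeA :: "complex \<Rightarrow> nat \<Rightarrow> complex \<Rightarrow> complex \<Rightarrow> gen \<Rightarrow> complex mat" where
  "typeA q N \<omega> lam2 g =
     (let lam1 = \<omega> * q ^ (N - 1) in
      case g of
        K1  \<Rightarrow> mat N N (\<lambda>(i, j). if i = j then lam1 * qpow q (- 2 * int j) else 0)
      | K1i \<Rightarrow> mat N N (\<lambda>(i, j). if i = j then inverse (lam1 * qpow q (- 2 * int j)) else 0)
      | K2  \<Rightarrow> mat N N (\<lambda>(i, j). if i = j then lam2 * qpow q (int j) else 0)
      | K2i \<Rightarrow> mat N N (\<lambda>(i, j). if i = j then inverse (lam2 * qpow q (int j)) else 0)
      | F1  \<Rightarrow> mat N N (\<lambda>(i, j). if i = j + 1 then 1 else 0)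
      | E1  \<Rightarrow> mat N N (\<lambda>(i, j). if j = i + 1
                 then qbr q 1 (int j) * qbr q lam1 (1 - int j) else 0)
      | E2  \<Rightarrow> 0\<^sub>m N N
      | F2  \<Rightarrow> 0\<^sub>m N N)"

definition intertwiner ::
  "nat \<Rightarrow> (gen \<Rightarrow> complex mat) \<Rightarrow> nat \<Rightarrow> (gen \<Rightarrow> complex mat) \<Rightarrow> complex mat \<Rightarrow> bool" where
  "intertwiner d r d' r' T \<longleftrightarrow> T \<in> carrier_mat d' d \<and> (\<forall>g. T * r g = r' g * T)"

(* (d, r, iota) is the induced module U_q(sl(2|1)) (x)_{U_q(g_+)} V_0 (V_0 = C^N with the
   U_q(g_+)-action sigma), presented by its universal property: iota : V_0 -> C^d is a
   U_q(g_+)-module map, and every U_q(g_+)-module map from V_0 into a (finite-dimensional)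
   U_q(sl(2|1))-module factors uniquely through iota via a U_q(sl(2|1))-module map. *)
definition induced_module ::
  "complex \<Rightarrow> (gen \<Rightarrow> complex mat) \<Rightarrow> nat \<Rightarrow> nat \<Rightarrow> (gen \<Rightarrow> complex mat) \<Rightarrow> complex mat \<Rightarrow> bool" where
  "induced_module q \<sigma> N d r \<iota> \<longleftrightarrow>
     is_rep q d r \<and> \<iota> \<in> carrier_mat d N \<and>
     (\<forall>g\<in>gplus_gens. r g * \<iota> = \<iota> * \<sigma> g) \<and>
     (\<forall>d' r' \<iota>'. is_rep q d' r' \<and> \<iota>' \<in> carrier_mat d' N \<and>
        (\<forall>g\<in>gplus_gens. r' g * \<iota>' = \<iota>' * \<sigma> g) \<longrightarrow>
        (\<exists>!T. intertwiner d r d' r' T \<and> T * \<iota> = \<iota>'))"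

definition submodule :: "nat \<Rightarrow> (gen \<Rightarrow> complex mat) \<Rightarrow> complex vec set \<Rightarrow> bool" where
  "submodule d r W \<longleftrightarrow> W \<subseteq> carrier_vec d \<and> 0\<^sub>v d \<in> W \<and>
     (\<forall>u\<in>W. \<forall>v\<in>W. u + v \<in> W) \<and> (\<forall>c. \<forall>u\<in>W. c \<cdot>\<^sub>v u \<in> W) \<and>
     (\<forall>g. \<forall>u\<in>W. r g *\<^sub>v u \<in> W)"

definition maximal_proper_submodule :: "nat \<Rightarrow> (gen \<Rightarrow> complex mat) \<Rightarrow> complex vec set \<Rightarrow> bool" where
  "maximal_proper_submodule d r W \<longleftrightarrow> submodule d r W \<and> W \<noteq> carrier_vec d \<and>
     (\<forall>W'. submodule d r W' \<and> W \<subseteq> W' \<longrightarrow> W' = W \<or> W' = carrier_vec d)"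

definition simple_module :: "nat \<Rightarrow> (gen \<Rightarrow> complex mat) \<Rightarrow> bool" where
  "simple_module d r \<longleftrightarrow> 0 < d \<and>
     (\<forall>W. submodule d r W \<longrightarrow> W = {0\<^sub>v d} \<or> W = carrier_vec d)"

end

theory Submission
  imports Defs
begin

text \<open>Both simple quotients are written down explicitly. For \<open>[N + \<mu>\<^sub>2] = 0\<close> (resp. \<open>[\<mu>\<^sub>2] = 0\<close>) the
  generators act on \<open>\<complex>\<^sup>2\<^sup>N\<^sup>+\<^sup>1\<close> (resp. \<open>\<complex>\<^sup>2\<^sup>N\<^sup>-\<^sup>1\<close>) by monomial matrices in a basis of joint eigenvectors of
  \<open>k\<^sub>1, k\<^sub>2\<close>; the defining relations reduce to identities between \<open>q\<close>-numbers. Since the weights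
  separate the basis vectors, every nonzero submodule contains a basis vector, and the generators
  lead from any basis vector to any other with nonzero coefficients, so the module is simple. The
  coefficients stay nonzero because \<open>q\<^sup>2\<^sup>m \<noteq> 1\<close> for \<open>0 < m < l'\<close>.

  The first \<open>N\<close> basis vectors span a copy of \<open>V\<^sub>0\<close> on which \<open>U\<^sub>q(\<gg>\<^sub>+)\<close> acts as on \<open>V\<^sub>0\<close>, so the universal
  property of \<open>M'\<close> yields a module map \<open>\<pi> : M' \<rightarrow> M\<close>. Its image is a nonzero submodule of the simple
  module \<open>M\<close>, hence everything, and its kernel \<open>M''\<close> is then a maximal proper submodule. When both
  \<open>[\<mu>\<^sub>2]\<close> and \<open>[N + \<mu>\<^sub>2]\<close> vanish, \<open>q\<^sup>2\<^sup>N = 1\<close> forces \<open>N = l'\<close>, and the \<open>(2N - 1)\<close>-dimensional module is used.\<close>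

section \<open>Monomial matrices\<close>

text \<open>All generators of the simple modules below act by monomial matrices in their standard bases.\<close>

definition monomial_mat :: "nat \<Rightarrow> nat \<Rightarrow> (nat \<Rightarrow> nat) \<Rightarrow> (nat \<Rightarrow> 'a::comm_ring_1) \<Rightarrow> 'a mat" where
  "monomial_mat nr nc \<sigma> c = mat nr nc (\<lambda>(i, j). if i = \<sigma> j then c j else 0)"

lemma monomial_mat_carrier [simp]: "monomial_mat nr nc \<sigma> c \<in> carrier_mat nr nc"
  and dim_monomial_mat [simp]: "dim_row (monomial_mat nr nc \<sigma> c) = nr" "dim_col (monomial_mat nr nc \<sigma> c) = nc"
  by (auto simp: monomial_mat_def)

lemma index_monomial_mat [simp]:
  "i < nr \<Longrightarrow> j < nc \<Longrightarrow> monomial_mat nr nc \<sigma> c $$ (i, j) = (if i = \<sigma> j then c j else 0)"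
  by (simp add: monomial_mat_def)

lemma monomial_mat_mult:
  "monomial_mat nr n \<sigma> c * monomial_mat n nc \<tau> e =
   monomial_mat nr nc (\<lambda>j. \<sigma> (\<tau> j)) (\<lambda>j. if \<tau> j < n then c (\<tau> j) * e j else 0)"
proof (rule eq_matI)
  fix i j assume "i < dim_row (monomial_mat nr nc (\<lambda>j. \<sigma> (\<tau> j)) (\<lambda>j. if \<tau> j < n then c (\<tau> j) * e j else 0))"
    and "j < dim_col (monomial_mat nr nc (\<lambda>j. \<sigma> (\<tau> j)) (\<lambda>j. if \<tau> j < n then c (\<tau> j) * e j else 0))"
  then have i: "i < nr" and j: "j < nc" by auto
  have "(monomial_mat nr n \<sigma> c * monomial_mat n nc \<tau> e) $$ (i, j) =
      (\<Sum>k\<in>{0..<n}. (if i = \<sigma> k then c k else 0) * (if k = \<tau> j then e j else 0))"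
    using i j by (simp add: scalar_prod_def)
  also have "\<dots> = (\<Sum>k\<in>{0..<n}. if k = \<tau> j then (if i = \<sigma> k then c k else 0) * e j else 0)"
    by (rule sum.cong) auto
  also have "\<dots> = (if \<tau> j < n then (if i = \<sigma> (\<tau> j) then c (\<tau> j) else 0) * e j else 0)"
    by simp
  finally show "(monomial_mat nr n \<sigma> c * monomial_mat n nc \<tau> e) $$ (i, j) =
      monomial_mat nr nc (\<lambda>j. \<sigma> (\<tau> j)) (\<lambda>j. if \<tau> j < n then c (\<tau> j) * e j else 0) $$ (i, j)"
    using i j by auto
qed auto

lemma index_monomial_mat_mult_vec:
  "v \<in> carrier_vec nc \<Longrightarrow> i < nr \<Longrightarrow>
   (monomial_mat nr nc \<sigma> c *\<^sub>v v) $ i = (\<Sum>j\<in>{0..<nc}. if i = \<sigma> j then c j * v $ j else 0)"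
  by (auto simp: monomial_mat_def scalar_prod_def intro!: sum.cong)

lemma diagonal_monomial_mat_mult_vec:
  "v \<in> carrier_vec n \<Longrightarrow> i < n \<Longrightarrow> (monomial_mat n n (\<lambda>j. j) k *\<^sub>v v) $ i = k i * v $ i"
  by (subst index_monomial_mat_mult_vec) simp_all

lemma monomial_mat_mult_unit_vec:
  assumes "j < nc"
  shows "monomial_mat nr nc \<sigma> c *\<^sub>v unit_vec nc j = (if \<sigma> j < nr then c j \<cdot>\<^sub>v unit_vec nr (\<sigma> j) else 0\<^sub>v nr)"
proof (rule eq_vecI)
  fix i assume "i < dim_vec (if \<sigma> j < nr then c j \<cdot>\<^sub>v unit_vec nr (\<sigma> j) else 0\<^sub>v nr)"
  then have i: "i < nr" by (auto split: if_splits)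
  have "(monomial_mat nr nc \<sigma> c *\<^sub>v unit_vec nc j) $ i = (\<Sum>k\<in>{0..<nc}. if i = \<sigma> k then c k * unit_vec nc j $ k else 0)"
    using i by (intro index_monomial_mat_mult_vec) auto
  also have "\<dots> = (\<Sum>k\<in>{0..<nc}. if k = j then (if i = \<sigma> k then c k else 0) else 0)"
    by (rule sum.cong) (auto simp: unit_vec_def)
  also have "\<dots> = (if i = \<sigma> j then c j else 0)"
    using assms by simp
  finally show "(monomial_mat nr nc \<sigma> c *\<^sub>v unit_vec nc j) $ i =
      (if \<sigma> j < nr then c j \<cdot>\<^sub>v unit_vec nr (\<sigma> j) else 0\<^sub>v nr) $ i"
    using i by auto
qed auto

lemma monomial_mat_mult_unit_vec_nonzero:
  assumes "j < nc" "\<sigma> j < nr" "c j \<noteq> 0"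
  shows "monomial_mat nr nc \<sigma> c *\<^sub>v unit_vec nc j \<noteq> 0\<^sub>v nr"
proof
  assume "monomial_mat nr nc \<sigma> c *\<^sub>v unit_vec nc j = 0\<^sub>v nr"
  then have "(c j \<cdot>\<^sub>v unit_vec nr (\<sigma> j)) $ \<sigma> j = 0\<^sub>v nr $ \<sigma> j"
    using assms by (simp add: monomial_mat_mult_unit_vec)
  then show False using assms by simp
qed

lemma monomial_mat_cong:
  "(\<And>j. j < nc \<Longrightarrow> c j = c' j) \<Longrightarrow> (\<And>j. j < nc \<Longrightarrow> c j \<noteq> 0 \<Longrightarrow> \<sigma> j = \<tau> j) \<Longrightarrow>
   monomial_mat nr nc \<sigma> c = monomial_mat nr nc \<tau> c'"
  by (rule eq_matI) (auto, metis)

lemma monomial_mat_add: "monomial_mat nr nc \<sigma> c + monomial_mat nr nc \<sigma> e = monomial_mat nr nc \<sigma> (\<lambda>j. c j + e j)"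
  and monomial_mat_diff: "monomial_mat nr nc \<sigma> c - monomial_mat nr nc \<sigma> e = monomial_mat nr nc \<sigma> (\<lambda>j. c j - e j)"
  and smult_monomial_mat: "x \<cdot>\<^sub>m monomial_mat nr nc \<sigma> c = monomial_mat nr nc \<sigma> (\<lambda>j. x * c j)"
  and monomial_mat_zero: "monomial_mat nr nc \<sigma> (\<lambda>j. 0) = 0\<^sub>m nr nc"
  by (rule eq_matI; auto)+

lemma diagonal_monomial_mat_conj:
  assumes "\<And>j. j < n \<Longrightarrow> c j \<noteq> 0 \<Longrightarrow> \<sigma> j < n \<and> k (\<sigma> j) * c j * k' j = s * c j"
  shows "monomial_mat n n (\<lambda>j. j) k * monomial_mat n n \<sigma> c * monomial_mat n n (\<lambda>j. j) k' = s \<cdot>\<^sub>m monomial_mat n n \<sigma> c"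
  unfolding monomial_mat_mult smult_monomial_mat
  apply (rule monomial_mat_cong)
  subgoal for j using assms[of j] by (cases "c j = 0") (auto simp: mult.assoc)
  by simp

lemma diagonal_monomial_mat_inverse:
  assumes "\<And>j. j < n \<Longrightarrow> k j * k' j = 1"
  shows "monomial_mat n n (\<lambda>j. j) k * monomial_mat n n (\<lambda>j. j) k' = 1\<^sub>m n"
proof -
  have "monomial_mat n n (\<lambda>j. j) k * monomial_mat n n (\<lambda>j. j) k' = monomial_mat n n (\<lambda>j. j) (\<lambda>j. 1)"
    unfolding monomial_mat_mult by (rule monomial_mat_cong) (use assms in auto)
  also have "\<dots> = 1\<^sub>m n" by (rule eq_matI) auto
  finally show ?thesis .
qed

lemma diagonal_monomial_mat_comm:
  "monomial_mat n n (\<lambda>j. j) k * monomial_mat n n (\<lambda>j. j) k' = monomial_mat n n (\<lambda>j. j) k' * monomial_mat n n (\<lambda>j. j) k"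
  unfolding monomial_mat_mult by (rule monomial_mat_cong) (auto simp: mult.commute)

section \<open>Arithmetic of \<open>q\<close>-numbers\<close>

lemma qpow_eq_power_int: "qpow q a = q powi a"
  by (simp add: qpow_def power_int_def)

lemma qbr_eq_if_power_int: "q powi a = x \<Longrightarrow> qbr q lam a = (x * lam - inverse (x * lam)) / (q - inverse q)"
  by (simp add: qbr_def qpow_eq_power_int power_int_minus)

lemma q_minus_inverse_nonzero: "(q::complex) \<noteq> 0 \<Longrightarrow> q\<^sup>2 \<noteq> 1 \<Longrightarrow> q - inverse q \<noteq> 0"
  by (simp add: field_simps power2_eq_square)

lemma qbr_one_zero [simp]: "qbr q 1 0 = 0"
  by (simp add: qbr_def qpow_def)

lemma qbr_weight: "1 / (q - inverse q) * (lam * qpow q a - inverse (lam * qpow q a)) = qbr q lam a"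
  by (simp add: qbr_def qpow_eq_power_int power_int_minus field_simps)

lemma qbr_eq_0_iff:
  assumes "q \<noteq> 0" "lam \<noteq> 0" "q\<^sup>2 \<noteq> 1"
  shows "qbr q lam a = 0 \<longleftrightarrow> (q powi a * lam)\<^sup>2 = 1"
proof -
  have "qbr q lam a = 0 \<longleftrightarrow> q powi a * lam - inverse (q powi a * lam) = 0"
    using q_minus_inverse_nonzero[OF assms(1,3)] by (simp add: qbr_eq_if_power_int)
  also have "\<dots> \<longleftrightarrow> (q powi a * lam)\<^sup>2 = 1"
    using assms by (simp add: field_simps power2_eq_square)
  finally show ?thesis .
qed

lemma qbr_mult_q: "q \<noteq> 0 \<Longrightarrow> qbr q (lam * q) a = qbr q lam (a + 1)"
  using qbr_eq_if_power_int[of q a _ "lam * q"] qbr_eq_if_power_int[of q "a + 1" "q powi a * q" lam]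
  by (simp add: power_int_add mult.assoc)

lemma qbr_mult_inverse_q: "q \<noteq> 0 \<Longrightarrow> qbr q (lam * inverse q) a = qbr q lam (a - 1)"
  using qbr_eq_if_power_int[of q a _ "lam * inverse q"] qbr_eq_if_power_int[of q "a - 1" "q powi a * inverse q" lam]
  by (simp add: power_int_diff field_simps)

lemma inverse_power_eq_qpow: "inverse q ^ n = qpow q (- int n)"
  by (cases "n = 0") (auto simp: qpow_def)

lemma qbr_nonzero_if_qbr_zero:
  assumes q: "q \<noteq> 0" and lam: "lam \<noteq> 0" and qq: "q\<^sup>2 \<noteq> 1"
    and zero: "qbr q lam a = 0" and k: "q ^ (2 * k) \<noteq> 1" and ab: "b = a + int k \<or> a = b + int k"
  shows "qbr q lam b \<noteq> 0"
proof
  assume "qbr q lam b = 0"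
  then have "(q powi b * lam)\<^sup>2 = (q powi a * lam)\<^sup>2"
    using zero qbr_eq_0_iff[OF q lam qq] by simp
  then have "(q powi b)\<^sup>2 = (q powi a)\<^sup>2" using lam by (simp add: power_mult_distrib)
  moreover have "(q powi (a + int k))\<^sup>2 = (q powi a)\<^sup>2 * q ^ (2 * k)" "(q powi (b + int k))\<^sup>2 = (q powi b)\<^sup>2 * q ^ (2 * k)"
    using q by (simp_all add: power_int_add power_mult_distrib power_mult mult.commute[of 2])
  ultimately have "(q powi a)\<^sup>2 * q ^ (2 * k) = (q powi a)\<^sup>2 * 1"
    using ab by auto
  then show False using q k by simp
qed

lemma qbr_sl2_commutator:
  fixes q lam :: complex and m :: int
  assumes q: "q \<noteq> 0" and lam: "lam \<noteq> 0" and qq: "q\<^sup>2 \<noteq> 1"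
  shows "qbr q 1 (m + 1) * qbr q lam (- m) - qbr q 1 m * qbr q lam (1 - m) = qbr q lam (- 2 * m)"
proof -
  define x where "x = q powi m"
  have x: "x \<noteq> 0" using q by (simp add: x_def)
  have p: "q powi (m + 1) = x * q" "q powi (- m) = inverse x" "q powi (1 - m) = q * inverse x"
    "q powi (- 2 * m) = inverse x * inverse x" "q powi m = x"
    using q by (simp_all add: x_def power_int_add power_int_diff power_int_minus power_int_mult field_simps power2_eq_square)
  \<comment> \<open>naming \<open>q\<^sup>2 - 1\<close> lets \<open>field_simps\<close> clear the denominator \<open>q - q\<^sup>-\<^sup>1 = E / q\<close>\<close>
  define E where "E = q * q - 1"
  have E: "E \<noteq> 0" "q - inverse q = E / q"
    using q qq by (simp_all add: E_def power2_eq_square field_simps)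
  show ?thesis
    unfolding qbr_eq_if_power_int[OF p(1)] qbr_eq_if_power_int[OF p(2)] qbr_eq_if_power_int[OF p(3)]
      qbr_eq_if_power_int[OF p(4)] qbr_eq_if_power_int[OF p(5)] E(2)
    using x q lam E(1) by (simp add: field_simps; simp add: E_def algebra_simps)
qed

text \<open>On a \<open>U\<^sub>q(sl(2))\<close>-string \<open>w\<^sub>0, \<dots>, w\<^sub>L\<^sub>-\<^sub>1\<close> with \<open>f w\<^sub>k = w\<^sub>k\<^sub>+\<^sub>1\<close> and \<open>e w\<^sub>k = [k][\<mu> + 1 - k] w\<^sub>k\<^sub>-\<^sub>1\<close>,
  \<open>e f - f e\<close> acts on \<open>w\<^sub>k\<close> by \<open>[\<mu> - 2k]\<close>; at the end of the string this needs \<open>[\<mu> + 1 - L] = 0\<close>.\<close>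

lemma qbr_sl2_string:
  fixes q lam :: complex
  assumes q: "q \<noteq> 0" and lam: "lam \<noteq> 0" and qq: "q\<^sup>2 \<noteq> 1"
    and closed: "qbr q lam (1 - int L) = 0" and k: "k < L"
  shows "(if Suc k < L then qbr q 1 (int k + 1) * qbr q lam (- int k) else 0)
    - qbr q 1 (int k) * qbr q lam (1 - int k) = qbr q lam (- 2 * int k)"
proof (cases "Suc k < L")
  case False
  with k have "- int k = 1 - int L" by simp
  then show ?thesis using qbr_sl2_commutator[OF q lam qq, of "int k"] closed False by simp
qed (use qbr_sl2_commutator[OF q lam qq, of "int k"] in simp)

lemma qbr_three_term:
  fixes q lam :: complex and a :: int
  assumes q: "q \<noteq> 0" and lam: "lam \<noteq> 0" and qq: "q\<^sup>2 \<noteq> 1"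
  shows "qbr q lam a - (q + inverse q) * qbr q lam (a + 1) + qbr q lam (a + 2) = 0"
proof -
  define x where "x = q powi a"
  have x: "x \<noteq> 0" using q by (simp add: x_def)
  have p: "q powi (a + 1) = x * q" "q powi (a + 2) = x * q * q" "q powi a = x"
    using q by (simp_all add: x_def power_int_add power2_eq_square)
  define E where "E = q * q - 1"
  have E: "E \<noteq> 0" "q - inverse q = E / q"
    using q qq by (simp_all add: E_def power2_eq_square field_simps)
  show ?thesis
    unfolding qbr_eq_if_power_int[OF p(1)] qbr_eq_if_power_int[OF p(2)] qbr_eq_if_power_int[OF p(3)]
      E(2)
    using x q lam E(1) by (simp add: field_simps; simp add: E_def algebra_simps)
qed

lemma qbr_exchange:
  fixes q lam mu :: complex and j :: int
  assumes q: "q \<noteq> 0" and lam: "lam \<noteq> 0" and mu: "mu \<noteq> 0" and qq: "q\<^sup>2 \<noteq> 1"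
  shows "qbr q lam (2 - j) * qbr q mu j - qbr q mu (j - 1) * qbr q lam (1 - j) = qbr q (lam * mu) 1"
proof -
  define x where "x = q powi j"
  have x: "x \<noteq> 0" using q by (simp add: x_def)
  have p: "q powi (2 - j) = q * q * inverse x" "q powi (j - 1) = x * inverse q" "q powi j = x"
    "q powi (1 - j) = q * inverse x" "q powi 1 = q"
    using q by (simp_all add: x_def power_int_diff field_simps power2_eq_square)
  define E where "E = q * q - 1"
  have E: "E \<noteq> 0" "q - inverse q = E / q"
    using q qq by (simp_all add: E_def power2_eq_square field_simps)
  show ?thesis
    unfolding qbr_eq_if_power_int[OF p(1)] qbr_eq_if_power_int[OF p(2)] qbr_eq_if_power_int[OF p(3)]
      qbr_eq_if_power_int[OF p(4)] qbr_eq_if_power_int[OF p(5)] E(2)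
    using x q lam mu E(1) by (simp add: field_simps; simp add: E_def algebra_simps)
qed

lemma qint_qbr_exchange:
  fixes q mu :: complex and p :: int
  assumes q: "q \<noteq> 0" and mu: "mu \<noteq> 0" and qq: "q\<^sup>2 \<noteq> 1"
  shows "qbr q 1 (p - 1) * qbr q mu p - qbr q 1 p * qbr q mu (p - 1) = - qbr q mu 0"
proof -
  define x where "x = q powi p"
  have x: "x \<noteq> 0" using q by (simp add: x_def)
  have e: "q powi (p - 1) = x * inverse q" "q powi p = x" "q powi 0 = 1"
    using q by (simp_all add: x_def power_int_diff field_simps power2_eq_square)
  define E where "E = q * q - 1"
  have E: "E \<noteq> 0" "q - inverse q = E / q"
    using q qq by (simp_all add: E_def power2_eq_square field_simps)
  show ?thesis
    unfolding qbr_eq_if_power_int[OF e(1)] qbr_eq_if_power_int[OF e(2)] qbr_eq_if_power_int[OF e(3)]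
      E(2)
    using x q mu E(1) by (simp add: field_simps; simp add: E_def algebra_simps)
qed

section \<open>The order of a root of unity\<close>

lemma root_of_unity_nonzero: "\<exists>n>0. (q::complex) ^ n = 1 \<Longrightarrow> q \<noteq> 0"
  by (metis power_0_left zero_neq_one neq0_conv)

lemma ordq_pos: "\<exists>n>0. (q::complex) ^ n = 1 \<Longrightarrow> 0 < ordq q"
  and power_ordq: "\<exists>n>0. (q::complex) ^ n = 1 \<Longrightarrow> q ^ ordq q = 1"
  using LeastI_ex[of "\<lambda>n. 0 < n \<and> q ^ n = 1"] by (auto simp: ordq_def)

lemma ordq_dvd:
  assumes root: "\<exists>n>0. (q::complex) ^ n = 1" and qn: "q ^ n = 1"
  shows "ordq q dvd n"
proof (rule ccontr)
  define l where "l = ordq q"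
  have l: "0 < l" "q ^ l = 1" using ordq_pos[OF root] power_ordq[OF root] by (auto simp: l_def)
  have "q ^ n = (q ^ l) ^ (n div l) * q ^ (n mod l)"
    by (metis div_mult_mod_eq power_add power_mult mult.commute)
  then have "q ^ (n mod l) = 1" using qn l by simp
  moreover assume "\<not> ordq q dvd n"
  then have "0 < n mod l" by (metis l_def mod_0_imp_dvd neq0_conv)
  ultimately have "l \<le> n mod l" unfolding l_def ordq_def by (intro Least_le) simp
  with l show False by (meson mod_less_divisor not_le)
qed

lemma lprime_le:
  assumes root: "\<exists>n>0. (q::complex) ^ n = 1" and m: "0 < m" and qm: "q ^ (2 * m) = 1"
  shows "lprime q \<le> m"
proof (cases "odd (ordq q)")
  case True
  have "ordq q dvd 2 * m" using ordq_dvd[OF root qm] .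
  moreover have "coprime (ordq q) 2" using True by (simp add: coprime_commute)
  ultimately have "ordq q dvd m" using coprime_dvd_mult_right_iff by blast
  with True m show ?thesis by (simp add: lprime_def dvd_imp_le)
next
  case False
  then obtain k where "ordq q = 2 * k" by blast
  with ordq_dvd[OF root qm] m show ?thesis by (simp add: lprime_def dvd_imp_le)
qed

lemma power_double_lprime:
  assumes "\<exists>n>0. (q::complex) ^ n = 1"
  shows "q ^ (2 * lprime q) = 1"
proof (cases "odd (ordq q)")
  case True
  then show ?thesis using power_ordq[OF assms] by (simp add: lprime_def mult.commute[of 2] power_mult)
next
  case False
  then show ?thesis using power_ordq[OF assms] by (simp add: lprime_def)
qed

lemma power_double_ne_one_below_lprime:
  "\<exists>n>0. (q::complex) ^ n = 1 \<Longrightarrow> 0 < m \<Longrightarrow> m < lprime q \<Longrightarrow> q ^ (2 * m) \<noteq> 1"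
  using lprime_le[of q m] by fastforce

lemma power_eq_power_imp_eq:
  assumes no_roots: "\<And>m. 0 < m \<Longrightarrow> m \<le> n \<Longrightarrow> (q::complex) ^ (2 * m) \<noteq> 1" and q: "q \<noteq> 0"
    and "a \<le> n" "b \<le> n" "q ^ a = q ^ b"
  shows "a = b"
proof -
  have False if "a < b" "b \<le> n" "q ^ a = q ^ b" for a b
  proof -
    have "q ^ b = q ^ a * q ^ (b - a)" using that(1) by (metis le_add_diff_inverse less_imp_le power_add)
    then have "q ^ a * q ^ (b - a) = q ^ a * 1" using that(3) by simp
    then have "q ^ (b - a) = 1" using q by (simp only: mult_cancel_left) simp
    then have "q ^ (2 * (b - a)) = 1" by (simp add: power_mult mult.commute[of 2])
    then show False using no_roots[of "b - a"] that by simp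
  qed
  then show ?thesis using assms(3-5) by (metis linorder_neqE_nat)
qed

section \<open>Submodules, simple modules and quotient maps\<close>

lemma submodule_carrier_vec: "(\<And>g. r g \<in> carrier_mat d d) \<Longrightarrow> submodule d r (carrier_vec d)"
  by (auto simp: submodule_def) (metis mult_mat_vec_carrier)

lemma submodule_image:
  assumes sub: "submodule d r W" and T: "intertwiner d r d' r' T"
    and r: "\<And>g. r g \<in> carrier_mat d d" and r': "\<And>g. r' g \<in> carrier_mat d' d'"
  shows "submodule d' r' ((\<lambda>v. T *\<^sub>v v) ` W)"
proof -
  have Tc: "T \<in> carrier_mat d' d" using T by (simp add: intertwiner_def)
  have Wc: "W \<subseteq> carrier_vec d" using sub by (simp add: submodule_def)
  show ?thesis
    unfolding submodule_def
  proof (intro conjI ballI allI)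
    show "(\<lambda>v. T *\<^sub>v v) ` W \<subseteq> carrier_vec d'" using Wc Tc by auto
    have "T *\<^sub>v 0\<^sub>v d = 0\<^sub>v d'" using Tc by auto
    then show "0\<^sub>v d' \<in> (\<lambda>v. T *\<^sub>v v) ` W" using sub by (metis rev_image_eqI submodule_def)
  next
    fix u v assume "u \<in> (\<lambda>v. T *\<^sub>v v) ` W" "v \<in> (\<lambda>v. T *\<^sub>v v) ` W"
    then obtain a b where ab: "a \<in> W" "b \<in> W" "u = T *\<^sub>v a" "v = T *\<^sub>v b" by auto
    then have "u + v = T *\<^sub>v (a + b)" using Wc Tc by (simp add: mult_add_distrib_mat_vec subsetD)
    then show "u + v \<in> (\<lambda>v. T *\<^sub>v v) ` W" using sub ab by (simp add: submodule_def)
  next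
    fix c u assume "u \<in> (\<lambda>v. T *\<^sub>v v) ` W"
    then obtain a where a: "a \<in> W" "u = T *\<^sub>v a" by auto
    then have "c \<cdot>\<^sub>v u = T *\<^sub>v (c \<cdot>\<^sub>v a)" using Wc Tc by (simp add: mult_mat_vec subsetD)
    then show "c \<cdot>\<^sub>v u \<in> (\<lambda>v. T *\<^sub>v v) ` W" using sub a by (simp add: submodule_def)
  next
    fix g u assume "u \<in> (\<lambda>v. T *\<^sub>v v) ` W"
    then obtain a where a: "a \<in> W" "u = T *\<^sub>v a" by auto
    then have "r' g *\<^sub>v u = (r' g * T) *\<^sub>v a" using Wc Tc r'[of g] by auto
    also have "r' g * T = T * r g" using T by (simp add: intertwiner_def)
    also have "(T * r g) *\<^sub>v a = T *\<^sub>v (r g *\<^sub>v a)" using Wc Tc r[of g] a by auto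
    finally show "r' g *\<^sub>v u \<in> (\<lambda>v. T *\<^sub>v v) ` W" using sub a by (simp add: submodule_def)
  qed
qed

lemma submodule_kernel:
  assumes T: "intertwiner d r d' r' T"
    and r: "\<And>g. r g \<in> carrier_mat d d" and r': "\<And>g. r' g \<in> carrier_mat d' d'"
  shows "submodule d r {v \<in> carrier_vec d. T *\<^sub>v v = 0\<^sub>v d'}"
proof -
  have Tc: "T \<in> carrier_mat d' d" using T by (simp add: intertwiner_def)
  have "T *\<^sub>v (r g *\<^sub>v u) = 0\<^sub>v d'" if "u \<in> carrier_vec d" "T *\<^sub>v u = 0\<^sub>v d'" for g u
  proof -
    have "T *\<^sub>v (r g *\<^sub>v u) = (r' g * T) *\<^sub>v u"
      using T Tc r[of g] that(1) by (simp add: intertwiner_def flip: assoc_mult_mat_vec)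
    also have "\<dots> = 0\<^sub>v d'" using Tc r'[of g] that by auto
    finally show ?thesis .
  qed
  then show ?thesis
    using Tc r by (auto simp: submodule_def mult_add_distrib_mat_vec mult_mat_vec intro: mult_mat_vec_carrier)
qed

lemma submodule_unit_vec_step:
  assumes sub: "submodule d r W" and u: "unit_vec d i \<in> W" and g: "r g = monomial_mat d d \<sigma> c"
    and i: "i < d" and \<sigma>: "\<sigma> i < d" and c: "c i \<noteq> 0"
  shows "unit_vec d (\<sigma> i) \<in> W"
proof -
  have "r g *\<^sub>v unit_vec d i \<in> W" using sub u by (auto simp: submodule_def)
  then have "c i \<cdot>\<^sub>v unit_vec d (\<sigma> i) \<in> W" using i \<sigma> by (simp add: g monomial_mat_mult_unit_vec)
  then have "inverse (c i) \<cdot>\<^sub>v (c i \<cdot>\<^sub>v unit_vec d (\<sigma> i)) \<in> W" using sub by (auto simp: submodule_def)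
  then show ?thesis using c by (simp add: smult_smult_assoc)
qed

lemma submodule_unit_vec_walk:
  assumes sub: "submodule d r W" and g: "r g = monomial_mat d d \<sigma> c"
    and walk: "\<And>k. k < n \<Longrightarrow> \<sigma> (f k) = f (Suc k) \<and> f k < d \<and> f (Suc k) < d \<and> c (f k) \<noteq> 0"
    and start: "unit_vec d (f 0) \<in> W"
  shows "unit_vec d (f n) \<in> W"
  using walk
proof (induction n)
  case (Suc n)
  then have "unit_vec d (\<sigma> (f n)) \<in> W" by (intro submodule_unit_vec_step[OF sub _ g]) auto
  then show ?case using Suc.prems by auto
qed (use start in simp)

lemma submodule_eq_carrier_vec_if_unit_vecs:
  assumes sub: "submodule d r W" and u: "\<And>i. i < d \<Longrightarrow> unit_vec d i \<in> W"
  shows "W = carrier_vec d"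
proof
  show "W \<subseteq> carrier_vec d" using sub by (simp add: submodule_def)
  show "carrier_vec d \<subseteq> W"
  proof
    fix v :: "complex vec" assume v: "v \<in> carrier_vec d"
    have "vec d (\<lambda>i. if i < k then v $ i else 0) \<in> W" if "k \<le> d" for k
      using that
    proof (induction k)
      case 0
      have "vec d (\<lambda>i. if i < 0 then v $ i else 0) = 0\<^sub>v d" by (rule eq_vecI) auto
      then show ?case using sub by (simp add: submodule_def)
    next
      case (Suc k)
      have "vec d (\<lambda>i. if i < Suc k then v $ i else 0) =
          vec d (\<lambda>i. if i < k then v $ i else 0) + v $ k \<cdot>\<^sub>v unit_vec d k"
        by (rule eq_vecI) (auto simp: unit_vec_def less_Suc_eq)
      then show ?case using Suc sub u by (simp add: submodule_def)
    qed
    moreover have "vec d (\<lambda>i. if i < d then v $ i else 0) = v" using v by (intro eq_vecI) auto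
    ultimately show "v \<in> W" by (metis order_refl)
  qed
qed

text \<open>Applying \<open>k - k i\<close> (for a diagonal \<open>k\<close> separating \<open>i\<close> from another index in the support) to a
  vector with nonzero \<open>i\<close>-th coordinate shrinks its support without killing it.\<close>

lemma submodule_contains_unit_vec:
  assumes sub: "submodule d r W"
    and K1: "r K1 = monomial_mat d d (\<lambda>j. j) k1" and K2: "r K2 = monomial_mat d d (\<lambda>j. j) k2"
    and separating: "\<And>i i'. i < d \<Longrightarrow> i' < d \<Longrightarrow> i \<noteq> i' \<Longrightarrow> k1 i \<noteq> k1 i' \<or> k2 i \<noteq> k2 i'"
  shows "w \<in> W \<Longrightarrow> w \<noteq> 0\<^sub>v d \<Longrightarrow> \<exists>i<d. unit_vec d i \<in> W"
proof (induction "card {i. i < d \<and> w $ i \<noteq> 0}" arbitrary: w rule: less_induct)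
  case less
  have wc: "w \<in> carrier_vec d" using less.prems sub by (auto simp: submodule_def)
  define S where "S = {i. i < d \<and> w $ i \<noteq> 0}"
  have "\<exists>i<d. w $ i \<noteq> 0"
  proof (rule ccontr)
    assume "\<not> (\<exists>i<d. w $ i \<noteq> 0)"
    then have "w = 0\<^sub>v d" using wc by (intro eq_vecI) auto
    then show False using less.prems by simp
  qed
  then obtain i where i: "i \<in> S" by (auto simp: S_def)
  show ?case
  proof (cases "S = {i}")
    case True
    have "w = w $ i \<cdot>\<^sub>v unit_vec d i"
      using True wc by (intro eq_vecI) (auto simp: S_def unit_vec_def)
    then have "inverse (w $ i) \<cdot>\<^sub>v w = (inverse (w $ i) * w $ i) \<cdot>\<^sub>v unit_vec d i"
      by (metis smult_smult_assoc)
    also have "\<dots> = unit_vec d i" using i by (simp add: S_def)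
    finally have "unit_vec d i = inverse (w $ i) \<cdot>\<^sub>v w" ..
    also have "\<dots> \<in> W" using sub less.prems by (auto simp: submodule_def)
    finally show ?thesis using i by (auto simp: S_def)
  next
    case False
    then obtain i' where i': "i' \<in> S" "i' \<noteq> i" using i by blast
    then have id: "i < d" "i' < d" using i by (auto simp: S_def)
    obtain g k where g: "r g = monomial_mat d d (\<lambda>j. j) k" and kne: "k i \<noteq> k i'"
    proof (cases "k1 i = k1 i'")
      case True
      then show ?thesis using that[OF K2] separating[OF id] i'(2) by auto
    qed (use that[OF K1] in auto)
    define w' where "w' = r g *\<^sub>v w + (- k i) \<cdot>\<^sub>v w"
    have w'W: "w' \<in> W" using sub less.prems by (auto simp: submodule_def w'_def)
    have w'_index: "w' $ m = (k m - k i) * w $ m" if "m < d" for m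
      using that wc diagonal_monomial_mat_mult_vec[OF wc that, of k] by (simp add: w'_def g algebra_simps)
    have "{m. m < d \<and> w' $ m \<noteq> 0} \<subseteq> S - {i}" using w'_index by (auto simp: S_def)
    then have "card {m. m < d \<and> w' $ m \<noteq> 0} \<le> card (S - {i})" by (intro card_mono) (auto simp: S_def)
    also have "\<dots> < card S" using i by (intro card_Diff1_less) (auto simp: S_def)
    finally have "card {m. m < d \<and> w' $ m \<noteq> 0} < card {i. i < d \<and> w $ i \<noteq> 0}" by (simp add: S_def)
    moreover have "w' \<noteq> 0\<^sub>v d" using w'_index[OF id(2)] i' kne id by (auto simp: S_def)
    ultimately show ?thesis using less.hyps w'W by blast
  qed
qed

lemma simple_moduleI:
  assumes d: "0 < d"
    and K1: "r K1 = monomial_mat d d (\<lambda>j. j) k1" and K2: "r K2 = monomial_mat d d (\<lambda>j. j) k2"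
    and separating: "\<And>i i'. i < d \<Longrightarrow> i' < d \<Longrightarrow> i \<noteq> i' \<Longrightarrow> k1 i \<noteq> k1 i' \<or> k2 i \<noteq> k2 i'"
    and generating: "\<And>W i. submodule d r W \<Longrightarrow> i < d \<Longrightarrow> unit_vec d i \<in> W \<Longrightarrow> W = carrier_vec d"
  shows "simple_module d r"
  unfolding simple_module_def
proof (intro conjI allI impI d)
  fix W assume sub: "submodule d r W"
  show "W = {0\<^sub>v d} \<or> W = carrier_vec d"
  proof (cases "\<exists>w\<in>W. w \<noteq> 0\<^sub>v d")
    case True
    then show ?thesis
      using submodule_contains_unit_vec[OF sub K1 K2 separating] generating[OF sub] by blast
  qed (use sub in \<open>auto simp: submodule_def\<close>)
qed

lemma intertwiner_onto_simple:
  assumes T: "intertwiner d r d' r' T"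
    and r: "\<And>g. r g \<in> carrier_mat d d" and r': "\<And>g. r' g \<in> carrier_mat d' d'"
    and simple: "simple_module d' r'"
    and v: "v \<in> carrier_vec d" and nonzero: "T *\<^sub>v v \<noteq> 0\<^sub>v d'"
  shows "(\<lambda>v. T *\<^sub>v v) ` carrier_vec d = carrier_vec d'"
proof -
  have "submodule d' r' ((\<lambda>v. T *\<^sub>v v) ` carrier_vec d)"
    by (rule submodule_image[OF submodule_carrier_vec[OF r] T r r'])
  moreover have "(\<lambda>v. T *\<^sub>v v) ` carrier_vec d \<noteq> {0\<^sub>v d'}" using v nonzero by blast
  ultimately show ?thesis using simple by (auto simp: simple_module_def)
qed

lemma maximal_proper_submodule_kernel:
  assumes T: "intertwiner d r d' r' T"
    and r: "\<And>g. r g \<in> carrier_mat d d" and r': "\<And>g. r' g \<in> carrier_mat d' d'"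
    and simple: "simple_module d' r'" and onto: "(\<lambda>v. T *\<^sub>v v) ` carrier_vec d = carrier_vec d'"
  shows "maximal_proper_submodule d r {v \<in> carrier_vec d. T *\<^sub>v v = 0\<^sub>v d'}"
    (is "maximal_proper_submodule d r ?K")
  unfolding maximal_proper_submodule_def
proof (intro conjI allI impI)
  have Tc: "T \<in> carrier_mat d' d" using T by (simp add: intertwiner_def)
  show "submodule d r ?K" by (rule submodule_kernel[OF T r r'])
  have "0 < d'" using simple by (simp add: simple_module_def)
  then have "unit_vec d' 0 \<noteq> 0\<^sub>v d'" by (metis index_unit_vec(1) index_zero_vec(1) zero_neq_one)
  then show "?K \<noteq> carrier_vec d" using onto by (metis (mono_tags, lifting) imageE mem_Collect_eq unit_vec_carrier)
  fix W assume W: "submodule d r W \<and> ?K \<subseteq> W"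
  have Wc: "W \<subseteq> carrier_vec d" using W by (simp add: submodule_def)
  have "submodule d' r' ((\<lambda>v. T *\<^sub>v v) ` W)" using W submodule_image[OF _ T r r'] by blast
  then consider "(\<lambda>v. T *\<^sub>v v) ` W = {0\<^sub>v d'}" | "(\<lambda>v. T *\<^sub>v v) ` W = carrier_vec d'"
    using simple by (auto simp: simple_module_def)
  then show "W = ?K \<or> W = carrier_vec d"
  proof cases
    case 1
    then have "W \<subseteq> ?K" using Wc by auto
    then show ?thesis using W by auto
  next
    case 2
    have "v \<in> W" if v: "v \<in> carrier_vec d" for v
    proof -
      obtain w where w: "w \<in> W" "T *\<^sub>v v = T *\<^sub>v w"
        using 2 Tc v by (metis imageE mult_mat_vec_carrier)
      have wc: "w \<in> carrier_vec d" using w Wc by auto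
      have "T *\<^sub>v (v - w) = 0\<^sub>v d'"
        using Tc v wc w(2) by (simp add: mult_minus_distrib_mat_vec)
      then have "v - w \<in> W" using W v wc by auto
      then have "(v - w) + w \<in> W" using W w by (simp add: submodule_def)
      moreover have "(v - w) + w = v" using v wc by (intro eq_vecI) auto
      ultimately show "v \<in> W" by simp
    qed
    then show ?thesis using Wc by auto
  qed
qed

lemma induced_module_simple_quotient:
  assumes ind: "induced_module q \<sigma> N d r \<iota>"
    and rep: "is_rep q d' r'" and simple: "simple_module d' r'"
    and \<iota>': "\<iota>' \<in> carrier_mat d' N" "\<forall>g\<in>gplus_gens. r' g * \<iota>' = \<iota>' * \<sigma> g"
    and v: "v \<in> carrier_vec N" "\<iota>' *\<^sub>v v \<noteq> 0\<^sub>v d'"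
  shows "\<exists>\<pi>. intertwiner d r d' r' \<pi> \<and> (\<lambda>v. \<pi> *\<^sub>v v) ` carrier_vec d = carrier_vec d' \<and>
     maximal_proper_submodule d r {v \<in> carrier_vec d. \<pi> *\<^sub>v v = 0\<^sub>v d'}"
proof -
  have r: "\<And>g. r g \<in> carrier_mat d d" and \<iota>: "\<iota> \<in> carrier_mat d N"
    using ind by (auto simp: induced_module_def is_rep_def)
  have r': "\<And>g. r' g \<in> carrier_mat d' d'" using rep by (simp add: is_rep_def)
  obtain \<pi> where \<pi>: "intertwiner d r d' r' \<pi>" "\<pi> * \<iota> = \<iota>'"
    using ind rep \<iota>' unfolding induced_module_def by metis
  have "\<pi> *\<^sub>v (\<iota> *\<^sub>v v) = \<iota>' *\<^sub>v v"
    using \<pi> \<iota> v by (auto simp: intertwiner_def simp flip: assoc_mult_mat_vec)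
  then have onto: "(\<lambda>v. \<pi> *\<^sub>v v) ` carrier_vec d = carrier_vec d'"
    using intertwiner_onto_simple[OF \<pi>(1) r r' simple, of "\<iota> *\<^sub>v v"] \<iota> v by simp
  show ?thesis
    using \<pi>(1) onto maximal_proper_submodule_kernel[OF \<pi>(1) r r' simple onto] by blast
qed

section \<open>The module \<open>V\<^sub>0\<close>\<close>

text \<open>At \<open>j = 0\<close> the truncated \<open>j - 1\<close> is harmless because the coefficient \<open>[0]\<close> vanishes; the modules
  below use the same convention for \<open>e\<^sub>1\<close>.\<close>

lemma typeA_eq_monomial_mat:
  "typeA q N \<omega> lam2 K1 = monomial_mat N N (\<lambda>j. j) (\<lambda>j. \<omega> * q ^ (N - 1) * qpow q (- 2 * int j))"
  "typeA q N \<omega> lam2 K1i = monomial_mat N N (\<lambda>j. j) (\<lambda>j. inverse (\<omega> * q ^ (N - 1) * qpow q (- 2 * int j)))"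
  "typeA q N \<omega> lam2 K2 = monomial_mat N N (\<lambda>j. j) (\<lambda>j. lam2 * qpow q (int j))"
  "typeA q N \<omega> lam2 K2i = monomial_mat N N (\<lambda>j. j) (\<lambda>j. inverse (lam2 * qpow q (int j)))"
  "typeA q N \<omega> lam2 F1 = monomial_mat N N Suc (\<lambda>j. 1)"
  "typeA q N \<omega> lam2 E2 = monomial_mat N N (\<lambda>j. j) (\<lambda>j. 0)"
  "typeA q N \<omega> lam2 E1 =
     monomial_mat N N (\<lambda>j. j - 1) (\<lambda>j. qbr q 1 (int j) * qbr q (\<omega> * q ^ (N - 1)) (1 - int j))"
  by (rule eq_matI; auto simp: typeA_def Let_def; metis Suc_pred qbr_one_zero neq0_conv of_nat_0)+

locale typeA_parameters =
  fixes q \<omega> lam2 :: complex and N :: nat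
  assumes q_nonzero: "q \<noteq> 0" and q_square: "q\<^sup>2 \<noteq> 1" and omega: "\<omega> = 1 \<or> \<omega> = -1"
    and lam2_nonzero: "lam2 \<noteq> 0" and N_pos: "1 \<le> N"
begin

abbreviation lam1 :: complex where "lam1 \<equiv> \<omega> * q ^ (N - 1)"

lemma omega_nonzero: "\<omega> \<noteq> 0"
  using omega by auto

lemma lam1_nonzero: "lam1 \<noteq> 0"
  using omega_nonzero q_nonzero by simp

text \<open>This is \<open>[\<mu>\<^sub>1 + 1 - N] = 0\<close> for \<open>\<lambda>\<^sub>1 = \<omega> q\<^bsup>N-1\<^esup>\<close>, which lets the \<open>U\<^sub>q(sl(2))\<close>-string \<open>v\<^sub>0, \<dots>, v\<^sub>N\<^sub>-\<^sub>1\<close> stop.\<close>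

lemma qbr_lam1_vanishes: "qbr q lam1 (1 - int N) = 0"
proof -
  have "q powi (1 - int N) * q ^ (N - 1) = 1"
    using q_nonzero N_pos by (simp add: power_int_diff field_simps flip: power_Suc)
  then have "(q powi (1 - int N) * lam1)\<^sup>2 = 1"
    using omega by (auto simp: power2_eq_square algebra_simps)
  then show ?thesis using qbr_eq_0_iff[OF q_nonzero lam1_nonzero q_square] by simp
qed

lemma qbr_lam1q: "b = a + 1 \<Longrightarrow> qbr q (lam1 * q) a = qbr q lam1 b"
  using qbr_mult_q[OF q_nonzero] by simp

lemma qbr_lam1_inverse_q: "b = a - 1 \<Longrightarrow> qbr q (lam1 * inverse q) a = qbr q lam1 b"
  using qbr_mult_inverse_q[OF q_nonzero] by simp

lemma both_vanish_imp_N_eq_lprime: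
  assumes root: "\<exists>n>0. q ^ n = 1" and N: "N \<le> lprime q"
    and "qbr q lam2 0 = 0" "qbr q lam2 (int N) = 0"
  shows "N = lprime q"
proof -
  have "q ^ (2 * N) = 1"
    using qbr_nonzero_if_qbr_zero[OF q_nonzero lam2_nonzero q_square, of 0 N "int N"] assms(3,4) by auto
  then have "lprime q \<le> N" using lprime_le[OF root] N_pos by simp
  then show ?thesis using N by simp
qed

lemma top_vanishes_imp_N_less_lprime:
  assumes root: "\<exists>n>0. q ^ n = 1" and N: "N \<le> lprime q"
    and "qbr q lam2 0 \<noteq> 0" "qbr q lam2 (int N) = 0"
  shows "N < lprime q"
proof (rule ccontr)
  assume "\<not> N < lprime q"
  then have "(q ^ N)\<^sup>2 = 1" using power_double_lprime[OF root] N by (simp add: power_mult mult.commute[of 2])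
  moreover have "(q ^ N * lam2)\<^sup>2 = 1" using assms(4) qbr_eq_0_iff[OF q_nonzero lam2_nonzero q_square] by simp
  ultimately have "lam2\<^sup>2 = 1" by (simp add: power_mult_distrib)
  then show False using assms(3) qbr_eq_0_iff[OF q_nonzero lam2_nonzero q_square, of 0] by simp
qed

end

section \<open>The simple module of dimension \<open>2N + 1\<close>\<close>

text \<open>For \<open>[N + \<mu>\<^sub>2] = 0\<close> the simple quotient has the basis \<open>v\<^sub>0, \<dots>, v\<^sub>N\<^sub>-\<^sub>1\<close> (indices \<open>0..<N\<close>) of \<open>V\<^sub>0\<close>
  followed by \<open>y\<^sub>0, \<dots>, y\<^sub>N\<close> (indices \<open>N..2N\<close>), where \<open>f\<^sub>2 v\<^sub>j = [\<mu>\<^sub>2 + j] y\<^sub>j\<close>, \<open>e\<^sub>2 y\<^sub>m = v\<^sub>m\<close> and the \<open>y\<^sub>m\<close> form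
  the \<open>U\<^sub>q(gl(2))\<close>-string of highest weight \<open>(\<lambda>\<^sub>1 q, \<lambda>\<^sub>2)\<close>.\<close>

locale atypical_top = typeA_parameters +
  assumes top_vanishes: "qbr q lam2 (int N) = 0"
begin

abbreviation d :: nat where "d \<equiv> 2 * N + 1"

definition cK1 :: "nat \<Rightarrow> complex" where
  "cK1 i = (if i < N then lam1 * inverse q ^ (2 * i) else lam1 * q * inverse q ^ (2 * (i - N)))"
definition cK2 :: "nat \<Rightarrow> complex" where
  "cK2 i = (if i < N then lam2 * q ^ i else lam2 * q ^ (i - N))"
definition cE1 :: "nat \<Rightarrow> complex" where
  "cE1 i = (if i < N then qbr q 1 (int i) * qbr q lam1 (1 - int i)
    else qbr q 1 (int (i - N)) * qbr q (lam1 * q) (1 - int (i - N)))"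
definition cF1 :: "nat \<Rightarrow> complex" where
  "cF1 i = (if i < N then (if Suc i < N then 1 else 0) else (if i < 2 * N then 1 else 0))"
definition cE2 :: "nat \<Rightarrow> complex" where
  "cE2 i = (if N \<le> i \<and> i < 2 * N then 1 else 0)"
definition cF2 :: "nat \<Rightarrow> complex" where
  "cF2 i = (if i < N then qbr q lam2 (int i) else 0)"

definition rep :: "gen \<Rightarrow> complex mat" where
  "rep g = (case g of
     K1 \<Rightarrow> monomial_mat d d (\<lambda>j. j) cK1
   | K1i \<Rightarrow> monomial_mat d d (\<lambda>j. j) (\<lambda>i. inverse (cK1 i))
   | K2 \<Rightarrow> monomial_mat d d (\<lambda>j. j) cK2
   | K2i \<Rightarrow> monomial_mat d d (\<lambda>j. j) (\<lambda>i. inverse (cK2 i))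
   | E1 \<Rightarrow> monomial_mat d d (\<lambda>i. i - 1) cE1
   | F1 \<Rightarrow> monomial_mat d d Suc cF1
   | E2 \<Rightarrow> monomial_mat d d (\<lambda>i. i - N) cE2
   | F2 \<Rightarrow> monomial_mat d d (\<lambda>i. i + N) cF2)"

lemma cK1_nonzero: "cK1 i \<noteq> 0"
  using omega_nonzero q_nonzero by (simp add: cK1_def)

lemma cK2_nonzero: "cK2 i \<noteq> 0"
  using lam2_nonzero q_nonzero by (simp add: cK2_def)

lemma cE1_0: "cE1 0 = 0" and cE1_N: "cE1 N = 0"
  using N_pos by (simp_all add: cE1_def)

lemma qbr_lam1q_vanishes: "qbr q (lam1 * q) (- int N) = 0"
  using qbr_lam1_vanishes qbr_mult_q[OF q_nonzero, of lam1 "- int N"] by simp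

lemma rep_carrier: "rep g \<in> carrier_mat d d" by (cases g) (simp_all add: rep_def)

lemma rel_K_inverse: "rep K1 * rep K1i = 1\<^sub>m d" "rep K1i * rep K1 = 1\<^sub>m d"
  "rep K2 * rep K2i = 1\<^sub>m d" "rep K2i * rep K2 = 1\<^sub>m d"
  using cK1_nonzero cK2_nonzero by (auto simp: rep_def intro!: diagonal_monomial_mat_inverse)

lemma rel_K1K2: "rep K1 * rep K2 = rep K2 * rep K1"
  by (simp add: rep_def diagonal_monomial_mat_comm)

lemma cE1_support: "cE1 j \<noteq> 0 \<Longrightarrow> (\<exists>k. j = Suc k \<and> Suc k < N) \<or> (\<exists>m. j = N + Suc m)"
proof -
  assume a: "cE1 j \<noteq> 0"
  have "j \<noteq> 0" "j \<noteq> N" using a cE1_0 cE1_N by metis+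
  show ?thesis
  proof (cases "j < N")
    case True
    then have "j = Suc (j - 1) \<and> Suc (j - 1) < N" using \<open>j \<noteq> 0\<close> by simp
    then show ?thesis by blast
  next
    case False
    then have "j = N + Suc (j - N - 1)" using \<open>j \<noteq> N\<close> by simp
    then show ?thesis by blast
  qed
qed

lemma rel_K1E1: "rep K1 * rep E1 * rep K1i = q^2 \<cdot>\<^sub>m rep E1"
  unfolding rep_def gen.case
proof (rule diagonal_monomial_mat_conj)
  fix j assume j: "j < d" "cE1 j \<noteq> 0"
  from cE1_support[OF j(2)] show "j - 1 < d \<and> cK1 (j - 1) * cE1 j * inverse (cK1 j) = q^2 * cE1 j"
    using j q_nonzero omega_nonzero by (auto simp: cK1_def field_simps power2_eq_square)
qed

lemma rel_K2E1: "rep K2 * rep E1 * rep K2i = inverse q \<cdot>\<^sub>m rep E1"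
  unfolding rep_def gen.case
proof (rule diagonal_monomial_mat_conj)
  fix j assume j: "j < d" "cE1 j \<noteq> 0"
  from cE1_support[OF j(2)] show "j - 1 < d \<and> cK2 (j - 1) * cE1 j * inverse (cK2 j) = inverse q * cE1 j"
    using j q_nonzero lam2_nonzero by (auto simp: cK2_def field_simps)
qed

lemma rel_K1E2: "rep K1 * rep E2 * rep K1i = inverse q \<cdot>\<^sub>m rep E2"
  unfolding rep_def gen.case
proof (rule diagonal_monomial_mat_conj)
  fix j assume j: "j < d" "cE2 j \<noteq> 0"
  then have "\<exists>m. j = N + m \<and> m < N" by (auto simp: cE2_def split: if_splits intro: exI[of _ "j - N"])
  then show "j - N < d \<and> cK1 (j - N) * cE2 j * inverse (cK1 j) = inverse q * cE2 j"
    using j q_nonzero omega_nonzero by (auto simp: cK1_def field_simps)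
qed

lemma rel_K2E2: "rep K2 * rep E2 * rep K2i = 1 \<cdot>\<^sub>m rep E2"
  unfolding rep_def gen.case
proof (rule diagonal_monomial_mat_conj)
  fix j assume j: "j < d" "cE2 j \<noteq> 0"
  then have "\<exists>m. j = N + m \<and> m < N" by (auto simp: cE2_def split: if_splits intro: exI[of _ "j - N"])
  then show "j - N < d \<and> cK2 (j - N) * cE2 j * inverse (cK2 j) = 1 * cE2 j"
    using j q_nonzero lam2_nonzero by (auto simp: cK2_def field_simps)
qed

lemma cF1_support: "cF1 j \<noteq> 0 \<Longrightarrow> (Suc j < N) \<or> (\<exists>m. j = N + m \<and> m < N)"
  by (auto simp: cF1_def split: if_splits intro: exI[of _ "j - N"])

lemma rel_K1F1: "rep K1 * rep F1 * rep K1i = inverse q ^ 2 \<cdot>\<^sub>m rep F1"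
  unfolding rep_def gen.case
proof (rule diagonal_monomial_mat_conj)
  fix j assume j: "j < d" "cF1 j \<noteq> 0"
  from cF1_support[OF j(2)] show "Suc j < d \<and> cK1 (Suc j) * cF1 j * inverse (cK1 j) = inverse q ^ 2 * cF1 j"
    using j q_nonzero omega_nonzero by (auto simp: cK1_def field_simps Suc_diff_le power2_eq_square)
qed

lemma rel_K2F1: "rep K2 * rep F1 * rep K2i = q \<cdot>\<^sub>m rep F1"
  unfolding rep_def gen.case
proof (rule diagonal_monomial_mat_conj)
  fix j assume j: "j < d" "cF1 j \<noteq> 0"
  from cF1_support[OF j(2)] show "Suc j < d \<and> cK2 (Suc j) * cF1 j * inverse (cK2 j) = q * cF1 j"
    using j q_nonzero lam2_nonzero by (auto simp: cK2_def field_simps Suc_diff_le)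
qed

lemma rel_K1F2: "rep K1 * rep F2 * rep K1i = q \<cdot>\<^sub>m rep F2"
  unfolding rep_def gen.case
proof (rule diagonal_monomial_mat_conj)
  fix j assume j: "j < d" "cF2 j \<noteq> 0"
  then have "j < N" by (auto simp: cF2_def split: if_splits)
  then show "j + N < d \<and> cK1 (j + N) * cF2 j * inverse (cK1 j) = q * cF2 j"
    using j q_nonzero omega_nonzero by (auto simp: cK1_def field_simps)
qed

lemma rel_K2F2: "rep K2 * rep F2 * rep K2i = 1 \<cdot>\<^sub>m rep F2"
  unfolding rep_def gen.case
proof (rule diagonal_monomial_mat_conj)
  fix j assume j: "j < d" "cF2 j \<noteq> 0"
  then have "j < N" by (auto simp: cF2_def split: if_splits)
  then show "j + N < d \<and> cK2 (j + N) * cF2 j * inverse (cK2 j) = 1 * cF2 j"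
    using j q_nonzero lam2_nonzero by (auto simp: cK2_def field_simps)
qed

lemma cK1_qbr: "j < N \<Longrightarrow> 1 / (q - inverse q) * (cK1 j - inverse (cK1 j)) = qbr q lam1 (- 2 * int j)"
  "\<not> j < N \<Longrightarrow> 1 / (q - inverse q) * (cK1 j - inverse (cK1 j)) = qbr q (lam1 * q) (- 2 * int (j - N))"
  using qbr_weight[of q lam1 "- 2 * int j"] qbr_weight[of q "lam1 * q" "- 2 * int (j - N)"]
  by (auto simp: cK1_def inverse_power_eq_qpow)

lemma cK2_qbr: "j < N \<Longrightarrow> 1 / (q - inverse q) * (cK2 j - inverse (cK2 j)) = qbr q lam2 (int j)"
  "1 / (q - inverse q) * (cK2 (N + m) - inverse (cK2 (N + m))) = qbr q lam2 (int m)"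
  using qbr_weight[of q lam2 "int j"] qbr_weight[of q lam2 "int m"]
  by (auto simp: cK2_def qpow_def)

lemma coeff_E1F1:
  assumes j: "j < d"
  shows "(if Suc j < d then cE1 (Suc j) * cF1 j else 0) - cF1 (j - 1) * cE1 j
     = 1 / (q - inverse q) * (cK1 j - inverse (cK1 j))"
proof (cases "j < N")
  case True
  have "(if Suc j < d then cE1 (Suc j) * cF1 j else 0) =
      (if Suc j < N then qbr q 1 (int j + 1) * qbr q lam1 (- int j) else 0)"
    using True by (simp add: cE1_def cF1_def algebra_simps)
  moreover have "cF1 (j - 1) * cE1 j = qbr q 1 (int j) * qbr q lam1 (1 - int j)"
    using True by (cases j) (auto simp: cF1_def cE1_def)
  ultimately show ?thesis
    unfolding cK1_qbr(1)[OF True]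
    using qbr_sl2_string[OF q_nonzero lam1_nonzero q_square qbr_lam1_vanishes True] by simp
next
  case False
  define m where "m = j - N"
  have jm: "j = N + m" and m: "m < N + 1" using False j by (auto simp: m_def)
  have "(if Suc j < d then cE1 (Suc j) * cF1 j else 0) =
      (if Suc m < N + 1 then qbr q 1 (int m + 1) * qbr q (lam1 * q) (- int m) else 0)"
    by (simp add: jm cE1_def cF1_def algebra_simps)
  moreover have "cF1 (j - 1) * cE1 j = qbr q 1 (int m) * qbr q (lam1 * q) (1 - int m)"
    using N_pos m by (cases m) (auto simp: jm cF1_def cE1_def)
  moreover have "qbr q (lam1 * q) (1 - int (N + 1)) = 0" using qbr_lam1q_vanishes by simp
  ultimately show ?thesis
    unfolding cK1_qbr(2)[OF False] m_def[symmetric]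
    using qbr_sl2_string[OF q_nonzero _ q_square _ m, of "lam1 * q"] lam1_nonzero q_nonzero by simp
qed

lemma rel_E1F1: "rep E1 * rep F1 - rep F1 * rep E1 = (1 / (q - inverse q)) \<cdot>\<^sub>m (rep K1 - rep K1i)"
proof -
  have a: "rep E1 * rep F1 = monomial_mat d d (\<lambda>j. j) (\<lambda>j. if Suc j < d then cE1 (Suc j) * cF1 j else 0)"
    by (simp add: rep_def monomial_mat_mult)
  have b: "rep F1 * rep E1 = monomial_mat d d (\<lambda>j. j) (\<lambda>j. cF1 (j - 1) * cE1 j)"
    unfolding rep_def gen.case monomial_mat_mult
    by (rule monomial_mat_cong) (auto simp: cE1_0 split: if_splits, metis One_nat_def Suc_pred cE1_0 mult_zero_right neq0_conv)
  have c: "rep K1 - rep K1i = monomial_mat d d (\<lambda>j. j) (\<lambda>j. cK1 j - inverse (cK1 j))"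
    by (simp add: rep_def monomial_mat_diff)
  show ?thesis unfolding a b c monomial_mat_diff smult_monomial_mat
    by (rule monomial_mat_cong, erule coeff_E1F1) simp
qed

lemma rel_E2F2: "rep E2 * rep F2 + rep F2 * rep E2 = (1 / (q - inverse q)) \<cdot>\<^sub>m (rep K2 - rep K2i)"
proof -
  have a: "rep E2 * rep F2 = monomial_mat d d (\<lambda>j. j) (\<lambda>j. cF2 j)"
    unfolding rep_def gen.case monomial_mat_mult
    by (rule monomial_mat_cong) (auto simp: cE2_def cF2_def)
  have b: "rep F2 * rep E2 = monomial_mat d d (\<lambda>j. j) (\<lambda>j. if N \<le> j then cF2 (j - N) else 0)"
    unfolding rep_def gen.case monomial_mat_mult
    by (rule monomial_mat_cong) (auto simp: cE2_def cF2_def split: if_splits)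
  have c: "rep K2 - rep K2i = monomial_mat d d (\<lambda>j. j) (\<lambda>j. cK2 j - inverse (cK2 j))"
    by (simp add: rep_def monomial_mat_diff)
  have coef: "cF2 j + (if N \<le> j then cF2 (j - N) else 0) = 1 / (q - inverse q) * (cK2 j - inverse (cK2 j))"
    if j: "j < d" for j
  proof (cases "j < N")
    case True
    then show ?thesis using cK2_qbr(1)[OF True] by (simp add: cF2_def)
  next
    case False
    define m where "m = j - N"
    have jm: "j = N + m" and m: "m \<le> N" using False j by (auto simp: m_def)
    show ?thesis unfolding jm cK2_qbr(2) using m top_vanishes by (auto simp: cF2_def)
  qed
  show ?thesis unfolding a b c monomial_mat_add smult_monomial_mat
    by (rule monomial_mat_cong, erule coef) simp
qed

lemma qbr_lam1_lam2_vanishes: "qbr q (lam1 * lam2) 1 = 0"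
proof -
  have "(q powi (int N) * lam2)\<^sup>2 = 1"
    using top_vanishes qbr_eq_0_iff[OF q_nonzero lam2_nonzero q_square] by simp
  moreover have "q * q ^ (N - 1) = q ^ N" using N_pos by (simp flip: power_Suc)
  then have "(q powi 1 * (lam1 * lam2))\<^sup>2 = (q powi (int N) * lam2)\<^sup>2"
    using omega by (auto simp: algebra_simps power2_eq_square)
  ultimately show ?thesis
    using qbr_eq_0_iff[OF q_nonzero _ q_square, of "lam1 * lam2" 1] lam1_nonzero lam2_nonzero by simp
qed

lemma coeff_E1F2: "1 \<le> j \<Longrightarrow> j < N \<Longrightarrow> cE1 (j + N) * cF2 j = cF2 (j - 1) * cE1 j"
proof -
  assume j: "1 \<le> j" "j < N"
  have "qbr q (lam1 * q) (1 - int j) = qbr q lam1 (2 - int j)"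
    by (intro qbr_lam1q) simp
  then have exchange: "qbr q (lam1 * q) (1 - int j) * qbr q lam2 (int j) = qbr q lam2 (int j - 1) * qbr q lam1 (1 - int j)"
    using qbr_exchange[OF q_nonzero lam1_nonzero lam2_nonzero q_square] qbr_lam1_lam2_vanishes by simp
  have "cE1 (j + N) * cF2 j = qbr q 1 (int j) * (qbr q (lam1 * q) (1 - int j) * qbr q lam2 (int j))"
    using j by (simp add: cE1_def cF2_def)
  also have "\<dots> = qbr q 1 (int j) * (qbr q lam2 (int j - 1) * qbr q lam1 (1 - int j))"
    by (simp only: exchange)
  also have "\<dots> = cF2 (j - 1) * cE1 j"
    using j by (simp add: cE1_def cF2_def of_nat_diff)
  finally show ?thesis .
qed

lemma rel_E1F2: "rep E1 * rep F2 = rep F2 * rep E1"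
proof -
  have a: "rep E1 * rep F2 = monomial_mat d d (\<lambda>j. j + N - 1) (\<lambda>j. if j < N then cE1 (j + N) * cF2 j else 0)"
    unfolding rep_def gen.case monomial_mat_mult
    by (rule monomial_mat_cong) (auto simp: cF2_def)
  have b: "rep F2 * rep E1 = monomial_mat d d (\<lambda>j. j + N - 1) (\<lambda>j. if j < N then cF2 (j - 1) * cE1 j else 0)"
    unfolding rep_def gen.case monomial_mat_mult
  proof (rule monomial_mat_cong)
    fix j assume "j < d"
    then show "(if j - 1 < d then cF2 (j - 1) * cE1 j else 0) = (if j < N then cF2 (j - 1) * cE1 j else 0)"
      using cE1_N by (cases "j = N") (auto simp: cF2_def)
    assume "(if j - 1 < d then cF2 (j - 1) * cE1 j else 0) \<noteq> 0"
    then have "j \<noteq> 0" by (cases "j = 0") (simp_all add: cE1_0)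
    then show "j - 1 + N = j + N - 1" by simp
  qed
  have "(if j < N then cE1 (j + N) * cF2 j else 0) = (if j < N then cF2 (j - 1) * cE1 j else 0)" for j
    using coeff_E1F2[of j] cE1_0 cE1_N by (cases "j = 0") auto
  then show ?thesis unfolding a b by simp
qed

lemma rel_E2F1: "rep E2 * rep F1 = rep F1 * rep E2"
proof -
  have a: "rep E2 * rep F1 = monomial_mat d d (\<lambda>j. Suc j - N) (\<lambda>j. if N \<le> j \<and> Suc (j - N) < N then 1 else 0)"
    unfolding rep_def gen.case monomial_mat_mult
    by (rule monomial_mat_cong) (auto simp: cE2_def cF1_def)
  have b: "rep F1 * rep E2 = monomial_mat d d (\<lambda>j. Suc j - N) (\<lambda>j. if N \<le> j \<and> Suc (j - N) < N then 1 else 0)"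
    unfolding rep_def gen.case monomial_mat_mult
    by (rule monomial_mat_cong) (auto simp: cE2_def cF1_def split: if_splits)
  show ?thesis unfolding a b ..
qed

lemma rel_E2E2: "rep E2 * rep E2 = 0\<^sub>m d d"
proof -
  have "rep E2 * rep E2 = monomial_mat d d (\<lambda>j. j - N - N) (\<lambda>j. 0)"
    unfolding rep_def gen.case monomial_mat_mult by (rule monomial_mat_cong) (simp_all add: cE2_def, linarith)
  then show ?thesis by (simp add: monomial_mat_zero)
qed

lemma rel_F2F2: "rep F2 * rep F2 = 0\<^sub>m d d"
proof -
  have "rep F2 * rep F2 = monomial_mat d d (\<lambda>j. j + N + N) (\<lambda>j. 0)"
    unfolding rep_def gen.case monomial_mat_mult by (rule monomial_mat_cong) (simp_all add: cF2_def)
  then show ?thesis by (simp add: monomial_mat_zero)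
qed

lemma serre_E_qbr_identity:
  fixes m :: int
  shows "(qbr q 1 m * qbr q lam1 (1 - m)) * (qbr q 1 (m - 1) * qbr q lam1 (1 - (m - 1)))
    - (q + inverse q) * ((qbr q 1 m * qbr q (lam1 * q) (1 - m)) * (qbr q 1 (m - 1) * qbr q lam1 (1 - (m - 1))))
    + (qbr q 1 m * qbr q (lam1 * q) (1 - m)) * (qbr q 1 (m - 1) * qbr q (lam1 * q) (1 - (m - 1))) = 0"
proof -
  have shift: "qbr q (lam1 * q) (1 - m) = qbr q lam1 (2 - m)" "qbr q (lam1 * q) (1 - (m - 1)) = qbr q lam1 (3 - m)"
    "qbr q lam1 (1 - (m - 1)) = qbr q lam1 (2 - m)"
    by (intro qbr_lam1q; simp)+ (simp add: algebra_simps)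
  have "qbr q lam1 (1 - m) - (q + inverse q) * qbr q lam1 ((1 - m) + 1) + qbr q lam1 ((1 - m) + 2) = 0"
    by (rule qbr_three_term[OF q_nonzero lam1_nonzero q_square])
  moreover have "(1 - m) + 1 = 2 - m" "(1 - m) + 2 = 3 - m" by simp_all
  ultimately have three: "qbr q lam1 (1 - m) - (q + inverse q) * qbr q lam1 (2 - m) + qbr q lam1 (3 - m) = 0"
    by simp
  show ?thesis unfolding shift
    using arg_cong[OF three, of "\<lambda>x. qbr q 1 m * qbr q 1 (m - 1) * qbr q lam1 (2 - m) * x"]
    by (simp add: algebra_simps)
qed

lemma coeff_serre_E:
  assumes j: "j < d"
  shows "(if N \<le> j \<and> j < 2*N then cE1 (j - N) * cE1 (j - N - 1) else 0)
    - (q + inverse q) * (if N < j then cE1 j * cE1 (j - N - 1) else 0)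
    + (if N + 2 \<le> j then cE1 j * cE1 (j - 1) else 0) = 0"
proof (cases "N + 2 \<le> j")
  case False
  then have "\<not> N \<le> j \<or> j - N - 1 = 0" by auto
  then show ?thesis using False cE1_0 by auto
next
  case True
  define m where "m = j - N"
  have jm: "j = N + m" and m: "2 \<le> m" "m \<le> N" using True j by (auto simp: m_def)
  have e: "int (m - 1) = int m - 1" using m by simp
  have A: "(if N \<le> j \<and> j < 2*N then cE1 (j - N) * cE1 (j - N - 1) else 0)
      = (qbr q 1 (int m) * qbr q lam1 (1 - int m)) * (qbr q 1 (int m - 1) * qbr q lam1 (1 - (int m - 1)))"
  proof (cases "m < N")
    case True
    then show ?thesis using m by (simp add: jm cE1_def e)
  next
    case False
    then show ?thesis using m qbr_lam1_vanishes by (simp add: jm)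
  qed
  have B: "(if N < j then cE1 j * cE1 (j - N - 1) else 0)
      = (qbr q 1 (int m) * qbr q (lam1 * q) (1 - int m)) * (qbr q 1 (int m - 1) * qbr q lam1 (1 - (int m - 1)))"
    using m by (simp add: jm cE1_def e)
  have "j - 1 = N + (m - 1)" using jm m by simp
  then have C: "(if N + 2 \<le> j then cE1 j * cE1 (j - 1) else 0)
      = (qbr q 1 (int m) * qbr q (lam1 * q) (1 - int m)) * (qbr q 1 (int m - 1) * qbr q (lam1 * q) (1 - (int m - 1)))"
    using m True by (simp add: jm cE1_def e)
  show ?thesis unfolding A B C by (rule serre_E_qbr_identity)
qed

lemma rel_serre_E: "rep E1 * rep E1 * rep E2 - (q + inverse q) \<cdot>\<^sub>m (rep E1 * rep E2 * rep E1) + rep E2 * rep E1 * rep E1 = 0\<^sub>m d d"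
proof -
  have a: "rep E1 * rep E1 * rep E2 = monomial_mat d d (\<lambda>j. j - (N + 2)) (\<lambda>j. if N \<le> j \<and> j < 2*N then cE1 (j - N) * cE1 (j - N - 1) else 0)"
    unfolding rep_def gen.case monomial_mat_mult
    by (rule monomial_mat_cong) (auto simp: cE2_def)
  have b: "rep E1 * rep E2 * rep E1 = monomial_mat d d (\<lambda>j. j - (N + 2)) (\<lambda>j. if N < j then cE1 j * cE1 (j - N - 1) else 0)"
    unfolding rep_def gen.case monomial_mat_mult
    by (rule monomial_mat_cong) (auto simp: cE2_def)
  have c: "rep E2 * rep E1 * rep E1 = monomial_mat d d (\<lambda>j. j - (N + 2)) (\<lambda>j. if N + 2 \<le> j then cE1 j * cE1 (j - 1) else 0)"
    unfolding rep_def gen.case monomial_mat_mult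
    by (rule monomial_mat_cong) (auto simp: cE2_def)
  show ?thesis unfolding a b c smult_monomial_mat monomial_mat_diff monomial_mat_add monomial_mat_zero[symmetric, of d d "\<lambda>j. j - (N + 2)"]
    by (rule monomial_mat_cong, erule coeff_serre_E) simp
qed

lemma coeff_serre_F:
  "(if Suc j < N then cF2 j else 0) - (q + inverse q) * (if Suc j < N then cF2 (Suc j) else 0)
    + (if Suc (Suc j) < N then cF2 (Suc (Suc j)) else 0) = 0"
proof -
  have g: "qbr q lam2 (int j) - (q + inverse q) * qbr q lam2 (int j + 1) + qbr q lam2 (int j + 2) = 0"
    by (rule qbr_three_term[OF q_nonzero lam2_nonzero q_square])
  show ?thesis
  proof (cases "Suc (Suc j) < N")
    case True then show ?thesis using g by (simp add: cF2_def algebra_simps)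
  next
    case False
    show ?thesis
    proof (cases "Suc j < N")
      case True
      then have "Suc (Suc j) = N" using False by simp
      then have e: "int j + 2 = int N" by simp
      have "qbr q lam2 (int j + 2) = 0" unfolding e by (rule top_vanishes)
      then show ?thesis using g True False by (simp add: cF2_def algebra_simps)
    qed (use False in simp)
  qed
qed

lemma rel_serre_F: "rep F1 * rep F1 * rep F2 - (q + inverse q) \<cdot>\<^sub>m (rep F1 * rep F2 * rep F1) + rep F2 * rep F1 * rep F1 = 0\<^sub>m d d"
proof -
  have a: "rep F1 * rep F1 * rep F2 = monomial_mat d d (\<lambda>j. j + N + 2) (\<lambda>j. if Suc j < N then cF2 j else 0)"
    unfolding rep_def gen.case monomial_mat_mult
    by (rule monomial_mat_cong) (auto simp: cF1_def cF2_def)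
  have b: "rep F1 * rep F2 * rep F1 = monomial_mat d d (\<lambda>j. j + N + 2) (\<lambda>j. if Suc j < N then cF2 (Suc j) else 0)"
    unfolding rep_def gen.case monomial_mat_mult
    by (rule monomial_mat_cong) (auto simp: cF1_def cF2_def)
  have c: "rep F2 * rep F1 * rep F1 = monomial_mat d d (\<lambda>j. j + N + 2) (\<lambda>j. if Suc (Suc j) < N then cF2 (Suc (Suc j)) else 0)"
    unfolding rep_def gen.case monomial_mat_mult
    by (rule monomial_mat_cong) (auto simp: cF1_def cF2_def)
  show ?thesis unfolding a b c smult_monomial_mat monomial_mat_diff monomial_mat_add monomial_mat_zero[symmetric, of d d "\<lambda>j. j + N + 2"]
    by (rule monomial_mat_cong, rule coeff_serre_F) simp
qed

lemma is_rep_rep: "is_rep q d rep"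
  unfolding is_rep_def
  using rep_carrier rel_K_inverse rel_K1K2 rel_K1E1 rel_K2E1 rel_K1E2 rel_K2E2 rel_K1F1 rel_K2F1 rel_K1F2 rel_K2F2
    rel_E1F1 rel_E2F2 rel_E1F2 rel_E2F1 rel_E2E2 rel_F2F2 rel_serre_E rel_serre_F
  by (simp add: Let_def cartan_def qpow_def)

definition emb :: "complex mat" where "emb = monomial_mat d N (\<lambda>j. j) (\<lambda>j. 1)"

lemma emb_carrier: "emb \<in> carrier_mat d N"
  by (simp add: emb_def)

lemma rep_emb: "g \<in> gplus_gens \<Longrightarrow> rep g * emb = emb * typeA q N \<omega> lam2 g"
  unfolding gplus_gens_def
  by (auto simp: rep_def emb_def typeA_eq_monomial_mat monomial_mat_mult cK1_def cK2_def cE1_def cF1_def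
      cE2_def inverse_power_eq_qpow qpow_def intro!: monomial_mat_cong)

context
  assumes no_small_roots: "\<And>m. 0 < m \<Longrightarrow> m \<le> N \<Longrightarrow> q ^ (2 * m) \<noteq> 1"
begin

lemma weights_separating:
  assumes i: "i < d" "i' < d" "i \<noteq> i'"
  shows "cK1 i \<noteq> cK1 i' \<or> cK2 i \<noteq> cK2 i'"
proof (rule ccontr)
  assume c: "\<not> (cK1 i \<noteq> cK1 i' \<or> cK2 i \<noteq> cK2 i')"
  define pos where "pos k = (if k < N then k else k - N)" for k
  have "cK2 k = lam2 * q ^ pos k" for k by (simp add: cK2_def pos_def)
  then have "q ^ pos i = q ^ pos i'" using c lam2_nonzero by simp
  moreover have "pos i \<le> N" "pos i' \<le> N" using i by (auto simp: pos_def)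
  ultimately have "pos i = pos i'" using power_eq_power_imp_eq[OF no_small_roots q_nonzero] by blast
  then have "\<exists>k<N. {i, i'} = {k, N + k}" using i by (auto simp: pos_def split: if_splits)
  moreover have "cK1 (N + k) = cK1 k * q" if "k < N" for k using that by (simp add: cK1_def)
  ultimately obtain k where "cK1 k * q = cK1 k * 1" using c by (auto simp: doubleton_eq_iff)
  then have "q = 1" using cK1_nonzero by (metis mult_left_cancel)
  then show False using q_square by simp
qed

lemma cF2_nonzero: "p < N \<Longrightarrow> cF2 p \<noteq> 0"
  using qbr_nonzero_if_qbr_zero[OF q_nonzero lam2_nonzero q_square top_vanishes no_small_roots[of "N - p"],
      of "int p"] by (simp add: cF2_def)

lemma cE1_nonzero: "1 \<le> m \<Longrightarrow> m \<le> N \<Longrightarrow> cE1 (N + m) \<noteq> 0"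
  using qbr_nonzero_if_qbr_zero[OF q_nonzero one_neq_zero q_square qbr_one_zero no_small_roots[of m], of "int m"]
    qbr_nonzero_if_qbr_zero[OF q_nonzero lam1_nonzero q_square qbr_lam1_vanishes no_small_roots[of "N + 1 - m"],
      of "2 - int m"]
    qbr_lam1q[of "2 - int m" "1 - int m"]
  by (simp add: cE1_def)

lemma submodule_eq_carrier_vec_if_unit_vec:
  assumes sub: "submodule d rep W" and i: "i < d" "unit_vec d i \<in> W"
  shows "W = carrier_vec d"
proof -
  have E1: "rep E1 = monomial_mat d d (\<lambda>i. i - 1) cE1" and F1: "rep F1 = monomial_mat d d Suc cF1"
    and E2: "rep E2 = monomial_mat d d (\<lambda>i. i - N) cE2" and F2: "rep F2 = monomial_mat d d (\<lambda>i. i + N) cF2"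
    by (simp_all add: rep_def)
  obtain m0 where m0: "m0 \<le> N" "unit_vec d (N + m0) \<in> W"
  proof (cases "i < N")
    case True
    then have "unit_vec d (i + N) \<in> W"
      using submodule_unit_vec_step[OF sub i(2) F2 i(1) _ cF2_nonzero] by simp
    then show ?thesis using that[of i] True by (simp add: add.commute)
  next
    case False
    with i show ?thesis by (intro that[of "i - N"]) auto
  qed
  have "unit_vec d (N + (m0 - m0)) \<in> W"
  proof (rule submodule_unit_vec_walk[OF sub E1, of m0 "\<lambda>k. N + (m0 - k)"])
    fix k assume "k < m0"
    then show "N + (m0 - k) - 1 = N + (m0 - Suc k) \<and> N + (m0 - k) < d \<and> N + (m0 - Suc k) < d \<and>
        cE1 (N + (m0 - k)) \<noteq> 0"
      using m0 cE1_nonzero[of "m0 - k"] by auto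
  qed (use m0 in simp)
  then have y: "unit_vec d (N + m) \<in> W" if "m \<le> N" for m
    using submodule_unit_vec_walk[OF sub F1, of m "\<lambda>k. N + k"] that by (auto simp: cF1_def)
  have v: "unit_vec d m \<in> W" if "m < N" for m
    using submodule_unit_vec_step[OF sub y[of m] E2] that by (auto simp: cE2_def)
  show ?thesis
  proof (rule submodule_eq_carrier_vec_if_unit_vecs[OF sub])
    fix k assume "k < d"
    then show "unit_vec d k \<in> W" using v y[of "k - N"] by (cases "k < N") auto
  qed
qed

lemma simple_module_rep: "simple_module d rep"
proof (rule simple_moduleI[of d rep cK1 cK2])
  show "\<And>W i. submodule d rep W \<Longrightarrow> i < d \<Longrightarrow> unit_vec d i \<in> W \<Longrightarrow> W = carrier_vec d"
    by (rule submodule_eq_carrier_vec_if_unit_vec)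
  show "\<And>i i'. i < d \<Longrightarrow> i' < d \<Longrightarrow> i \<noteq> i' \<Longrightarrow> cK1 i \<noteq> cK1 i' \<or> cK2 i \<noteq> cK2 i'"
    by (rule weights_separating)
qed (simp_all add: rep_def)

lemma induced_module_onto_rep:
  assumes ind: "induced_module q (typeA q N \<omega> lam2) N n r \<iota>"
  shows "\<exists>\<pi>. intertwiner n r d rep \<pi> \<and> (\<lambda>v. \<pi> *\<^sub>v v) ` carrier_vec n = carrier_vec d \<and>
     maximal_proper_submodule n r {v \<in> carrier_vec n. \<pi> *\<^sub>v v = 0\<^sub>v d}"
proof (rule induced_module_simple_quotient[OF ind is_rep_rep simple_module_rep emb_carrier _ unit_vec_carrier])
  show "\<forall>g\<in>gplus_gens. rep g * emb = emb * typeA q N \<omega> lam2 g" using rep_emb by blast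
  show "emb *\<^sub>v unit_vec N 0 \<noteq> 0\<^sub>v d"
    unfolding emb_def using N_pos by (intro monomial_mat_mult_unit_vec_nonzero) auto
qed

end

end

section \<open>The simple module of dimension \<open>2N - 1\<close>\<close>

text \<open>For \<open>[\<mu>\<^sub>2] = 0\<close> the simple quotient has the basis \<open>v\<^sub>0, \<dots>, v\<^sub>N\<^sub>-\<^sub>1\<close> (indices \<open>0..<N\<close>) of \<open>V\<^sub>0\<close>
  followed by \<open>y\<^sub>1, \<dots>, y\<^sub>N\<^sub>-\<^sub>1\<close> (indices \<open>N..2N-2\<close>), where \<open>f\<^sub>2 v\<^sub>j = [\<mu>\<^sub>2 + j] y\<^sub>j\<close>, \<open>e\<^sub>2 y\<^sub>j = v\<^sub>j\<close>
  and the \<open>y\<^sub>j\<close> form the \<open>U\<^sub>q(gl(2))\<close>-string of highest weight \<open>(\<lambda>\<^sub>1 q\<^sup>-\<^sup>1, \<lambda>\<^sub>2 q)\<close>; the vector \<open>f\<^sub>2 v\<^sub>0\<close>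
  lies in the maximal submodule.\<close>

locale atypical_bottom = typeA_parameters +
  assumes bottom_vanishes: "qbr q lam2 0 = 0"
begin

abbreviation d :: nat where "d \<equiv> 2 * N - 1"

definition cK1 :: "nat \<Rightarrow> complex" where
  "cK1 i = (if i < N then lam1 * inverse q ^ (2 * i) else lam1 * inverse q * inverse q ^ (2 * (i - N)))"
definition cK2 :: "nat \<Rightarrow> complex" where
  "cK2 i = (if i < N then lam2 * q ^ i else lam2 * q * q ^ (i - N))"
definition cE1 :: "nat \<Rightarrow> complex" where
  "cE1 i = (if i < N then qbr q 1 (int i) * qbr q lam1 (1 - int i)
    else qbr q 1 (int (i - N)) * qbr q (lam1 * inverse q) (1 - int (i - N)))"
definition cF1 :: "nat \<Rightarrow> complex" where
  "cF1 i = (if i < N then (if Suc i < N then 1 else 0) else (if Suc i < 2 * N - 1 then 1 else 0))"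
definition cE2 :: "nat \<Rightarrow> complex" where
  "cE2 i = (if N \<le> i \<and> i < 2 * N - 1 then 1 else 0)"
definition cF2 :: "nat \<Rightarrow> complex" where
  "cF2 i = (if i < N then qbr q lam2 (int i) else 0)"

definition rep :: "gen \<Rightarrow> complex mat" where
  "rep g = (case g of
     K1 \<Rightarrow> monomial_mat d d (\<lambda>j. j) cK1
   | K1i \<Rightarrow> monomial_mat d d (\<lambda>j. j) (\<lambda>i. inverse (cK1 i))
   | K2 \<Rightarrow> monomial_mat d d (\<lambda>j. j) cK2
   | K2i \<Rightarrow> monomial_mat d d (\<lambda>j. j) (\<lambda>i. inverse (cK2 i))
   | E1 \<Rightarrow> monomial_mat d d (\<lambda>i. i - 1) cE1
   | F1 \<Rightarrow> monomial_mat d d Suc cF1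
   | E2 \<Rightarrow> monomial_mat d d (\<lambda>i. i + 1 - N) cE2
   | F2 \<Rightarrow> monomial_mat d d (\<lambda>i. i + N - 1) cF2)"

lemma cK1_nonzero: "cK1 i \<noteq> 0"
  using omega_nonzero q_nonzero by (simp add: cK1_def)

lemma cK2_nonzero: "cK2 i \<noteq> 0"
  using lam2_nonzero q_nonzero by (simp add: cK2_def)

lemma cE1_0: "cE1 0 = 0" and cE1_N: "cE1 N = 0" and cF2_0: "cF2 0 = 0"
  using N_pos bottom_vanishes by (simp_all add: cE1_def cF2_def)

lemma lam1_inverse_q_nonzero: "lam1 * inverse q \<noteq> 0"
  using lam1_nonzero q_nonzero by simp

lemma qbr_lam1_inverse_q_vanishes: "qbr q (lam1 * inverse q) (2 - int N) = 0"
  using qbr_lam1_vanishes by (subst qbr_lam1_inverse_q[of "1 - int N"]) simp_all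

lemma rep_carrier: "rep g \<in> carrier_mat d d" by (cases g) (simp_all add: rep_def)

lemma rel_K_inverse: "rep K1 * rep K1i = 1\<^sub>m d" "rep K1i * rep K1 = 1\<^sub>m d"
  "rep K2 * rep K2i = 1\<^sub>m d" "rep K2i * rep K2 = 1\<^sub>m d"
  using cK1_nonzero cK2_nonzero by (auto simp: rep_def intro!: diagonal_monomial_mat_inverse)

lemma rel_K1K2: "rep K1 * rep K2 = rep K2 * rep K1"
  by (simp add: rep_def diagonal_monomial_mat_comm)

lemma cE1_support: "cE1 j \<noteq> 0 \<Longrightarrow> (\<exists>k. j = Suc k \<and> Suc k < N) \<or> (\<exists>m. j = N + Suc m)"
proof -
  assume a: "cE1 j \<noteq> 0"
  have "j \<noteq> 0" "j \<noteq> N" using a cE1_0 cE1_N by metis+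
  show ?thesis
  proof (cases "j < N")
    case True
    then have "j = Suc (j - 1) \<and> Suc (j - 1) < N" using \<open>j \<noteq> 0\<close> by simp
    then show ?thesis by blast
  next
    case False
    then have "j = N + Suc (j - N - 1)" using \<open>j \<noteq> N\<close> by simp
    then show ?thesis by blast
  qed
qed

lemma rel_K1E1: "rep K1 * rep E1 * rep K1i = q^2 \<cdot>\<^sub>m rep E1"
  unfolding rep_def gen.case
proof (rule diagonal_monomial_mat_conj)
  fix j assume j: "j < d" "cE1 j \<noteq> 0"
  from cE1_support[OF j(2)] show "j - 1 < d \<and> cK1 (j - 1) * cE1 j * inverse (cK1 j) = q^2 * cE1 j"
    using j q_nonzero omega_nonzero by (auto simp: cK1_def field_simps power2_eq_square)
qed

lemma rel_K2E1: "rep K2 * rep E1 * rep K2i = inverse q \<cdot>\<^sub>m rep E1"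
  unfolding rep_def gen.case
proof (rule diagonal_monomial_mat_conj)
  fix j assume j: "j < d" "cE1 j \<noteq> 0"
  from cE1_support[OF j(2)] show "j - 1 < d \<and> cK2 (j - 1) * cE1 j * inverse (cK2 j) = inverse q * cE1 j"
    using j q_nonzero lam2_nonzero by (auto simp: cK2_def field_simps)
qed

lemma cE2_support: "cE2 j \<noteq> 0 \<Longrightarrow> \<exists>m. j = N + m \<and> Suc m < N"
  by (auto simp: cE2_def split: if_splits intro: exI[of _ "j - N"])

lemma rel_K1E2: "rep K1 * rep E2 * rep K1i = inverse q \<cdot>\<^sub>m rep E2"
  unfolding rep_def gen.case
proof (rule diagonal_monomial_mat_conj)
  fix j assume j: "j < d" "cE2 j \<noteq> 0"
  from cE2_support[OF j(2)] show "j + 1 - N < d \<and> cK1 (j + 1 - N) * cE2 j * inverse (cK1 j) = inverse q * cE2 j"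
    using j q_nonzero omega_nonzero by (auto simp: cK1_def field_simps power2_eq_square)
qed

lemma rel_K2E2: "rep K2 * rep E2 * rep K2i = 1 \<cdot>\<^sub>m rep E2"
  unfolding rep_def gen.case
proof (rule diagonal_monomial_mat_conj)
  fix j assume j: "j < d" "cE2 j \<noteq> 0"
  from cE2_support[OF j(2)] show "j + 1 - N < d \<and> cK2 (j + 1 - N) * cE2 j * inverse (cK2 j) = 1 * cE2 j"
    using j q_nonzero lam2_nonzero by (auto simp: cK2_def field_simps)
qed

lemma cF1_support: "cF1 j \<noteq> 0 \<Longrightarrow> (Suc j < N) \<or> (\<exists>m. j = N + m \<and> Suc (Suc m) < N)"
  by (auto simp: cF1_def split: if_splits intro: exI[of _ "j - N"])

lemma rel_K1F1: "rep K1 * rep F1 * rep K1i = inverse q ^ 2 \<cdot>\<^sub>m rep F1"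
  unfolding rep_def gen.case
proof (rule diagonal_monomial_mat_conj)
  fix j assume j: "j < d" "cF1 j \<noteq> 0"
  from cF1_support[OF j(2)] show "Suc j < d \<and> cK1 (Suc j) * cF1 j * inverse (cK1 j) = inverse q ^ 2 * cF1 j"
    using j q_nonzero omega_nonzero by (auto simp: cK1_def field_simps Suc_diff_le power2_eq_square)
qed

lemma rel_K2F1: "rep K2 * rep F1 * rep K2i = q \<cdot>\<^sub>m rep F1"
  unfolding rep_def gen.case
proof (rule diagonal_monomial_mat_conj)
  fix j assume j: "j < d" "cF1 j \<noteq> 0"
  from cF1_support[OF j(2)] show "Suc j < d \<and> cK2 (Suc j) * cF1 j * inverse (cK2 j) = q * cF1 j"
    using j q_nonzero lam2_nonzero by (auto simp: cK2_def field_simps Suc_diff_le)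
qed

lemma cF2_support: "cF2 j \<noteq> 0 \<Longrightarrow> \<exists>k. j = Suc k \<and> Suc k < N"
  using cF2_0 by (cases j) (auto simp: cF2_def split: if_splits)

lemma rel_K1F2: "rep K1 * rep F2 * rep K1i = q \<cdot>\<^sub>m rep F2"
  unfolding rep_def gen.case
proof (rule diagonal_monomial_mat_conj)
  fix j assume j: "j < d" "cF2 j \<noteq> 0"
  from cF2_support[OF j(2)] show "j + N - 1 < d \<and> cK1 (j + N - 1) * cF2 j * inverse (cK1 j) = q * cF2 j"
    using j q_nonzero omega_nonzero by (auto simp: cK1_def field_simps power2_eq_square)
qed

lemma rel_K2F2: "rep K2 * rep F2 * rep K2i = 1 \<cdot>\<^sub>m rep F2"
  unfolding rep_def gen.case
proof (rule diagonal_monomial_mat_conj)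
  fix j assume j: "j < d" "cF2 j \<noteq> 0"
  from cF2_support[OF j(2)] show "j + N - 1 < d \<and> cK2 (j + N - 1) * cF2 j * inverse (cK2 j) = 1 * cF2 j"
    using j q_nonzero lam2_nonzero by (auto simp: cK2_def field_simps)
qed

lemma cK1_qbr: "j < N \<Longrightarrow> 1 / (q - inverse q) * (cK1 j - inverse (cK1 j)) = qbr q lam1 (- 2 * int j)"
  "\<not> j < N \<Longrightarrow> 1 / (q - inverse q) * (cK1 j - inverse (cK1 j)) = qbr q (lam1 * inverse q) (- 2 * int (j - N))"
  using qbr_weight[of q lam1 "- 2 * int j"] qbr_weight[of q "lam1 * inverse q" "- 2 * int (j - N)"]
  by (auto simp: cK1_def inverse_power_eq_qpow mult.assoc)

lemma cK2_qbr: "j < N \<Longrightarrow> 1 / (q - inverse q) * (cK2 j - inverse (cK2 j)) = qbr q lam2 (int j)"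
  "1 / (q - inverse q) * (cK2 (N + m) - inverse (cK2 (N + m))) = qbr q lam2 (int m + 1)"
  using qbr_weight[of q lam2 "int j"] qbr_weight[of q "lam2 * q" "int m"] qbr_mult_q[OF q_nonzero, of lam2 "int m"]
  by (auto simp: cK2_def qpow_def mult.assoc)

lemma coeff_E1F1:
  assumes j: "j < d"
  shows "(if Suc j < d then cE1 (Suc j) * cF1 j else 0) - cF1 (j - 1) * cE1 j
     = 1 / (q - inverse q) * (cK1 j - inverse (cK1 j))"
proof (cases "j < N")
  case True
  have "(if Suc j < d then cE1 (Suc j) * cF1 j else 0) =
      (if Suc j < N then qbr q 1 (int j + 1) * qbr q lam1 (- int j) else 0)"
    using True by (auto simp: cE1_def cF1_def algebra_simps)
  moreover have "cF1 (j - 1) * cE1 j = qbr q 1 (int j) * qbr q lam1 (1 - int j)"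
    using True by (cases j) (auto simp: cF1_def cE1_def)
  ultimately show ?thesis
    unfolding cK1_qbr(1)[OF True]
    using qbr_sl2_string[OF q_nonzero lam1_nonzero q_square qbr_lam1_vanishes True] by simp
next
  case False
  define m where "m = j - N"
  have jm: "j = N + m" and m: "m < N - 1" using False j by (auto simp: m_def)
  have "(if Suc j < d then cE1 (Suc j) * cF1 j else 0) =
      (if Suc m < N - 1 then qbr q 1 (int m + 1) * qbr q (lam1 * inverse q) (- int m) else 0)"
    using m by (auto simp: jm cE1_def cF1_def algebra_simps)
  moreover have "cF1 (j - 1) * cE1 j = qbr q 1 (int m) * qbr q (lam1 * inverse q) (1 - int m)"
    using N_pos m by (cases m) (auto simp: jm cF1_def cE1_def)
  moreover have "qbr q (lam1 * inverse q) (1 - int (N - 1)) = 0"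
    using qbr_lam1_inverse_q_vanishes N_pos by (simp add: of_nat_diff)
  ultimately show ?thesis
    unfolding cK1_qbr(2)[OF False] m_def[symmetric]
    using qbr_sl2_string[OF q_nonzero lam1_inverse_q_nonzero q_square _ m] by simp
qed

lemma rel_E1F1: "rep E1 * rep F1 - rep F1 * rep E1 = (1 / (q - inverse q)) \<cdot>\<^sub>m (rep K1 - rep K1i)"
proof -
  have a: "rep E1 * rep F1 = monomial_mat d d (\<lambda>j. j) (\<lambda>j. if Suc j < d then cE1 (Suc j) * cF1 j else 0)"
    by (simp add: rep_def monomial_mat_mult)
  have b: "rep F1 * rep E1 = monomial_mat d d (\<lambda>j. j) (\<lambda>j. cF1 (j - 1) * cE1 j)"
    unfolding rep_def gen.case monomial_mat_mult
  proof (rule monomial_mat_cong)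
    fix j assume "j < d"
    then show "(if j - 1 < d then cF1 (j - 1) * cE1 j else 0) = cF1 (j - 1) * cE1 j" by simp
  next
    fix j assume "j < d" and h: "(if j - 1 < d then cF1 (j - 1) * cE1 j else 0) \<noteq> 0"
    have "cE1 j \<noteq> 0" using h by (auto split: if_splits)
    then have "j \<noteq> 0" using cE1_0 by metis
    then show "Suc (j - 1) = j" by simp
  qed
  have c: "rep K1 - rep K1i = monomial_mat d d (\<lambda>j. j) (\<lambda>j. cK1 j - inverse (cK1 j))"
    by (simp add: rep_def monomial_mat_diff)
  show ?thesis unfolding a b c monomial_mat_diff smult_monomial_mat
    by (rule monomial_mat_cong, erule coeff_E1F1) simp
qed

lemma rel_E2F2: "rep E2 * rep F2 + rep F2 * rep E2 = (1 / (q - inverse q)) \<cdot>\<^sub>m (rep K2 - rep K2i)"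
proof -
  have a: "rep E2 * rep F2 = monomial_mat d d (\<lambda>j. j) (\<lambda>j. cF2 j)"
    unfolding rep_def gen.case monomial_mat_mult
  proof (rule monomial_mat_cong)
    fix j assume j: "j < d"
    show "(if j + N - 1 < d then cE2 (j + N - 1) * cF2 j else 0) = cF2 j"
    proof (cases "j < N")
      case True then show ?thesis using cF2_0 N_pos by (cases j) (auto simp: cE2_def)
    qed (simp add: cF2_def)
  qed (use N_pos in simp)
  have b: "rep F2 * rep E2 = monomial_mat d d (\<lambda>j. j) (\<lambda>j. if N \<le> j then cF2 (j + 1 - N) else 0)"
    unfolding rep_def gen.case monomial_mat_mult
    by (rule monomial_mat_cong) (auto simp: cE2_def cF2_def split: if_splits)
  have c: "rep K2 - rep K2i = monomial_mat d d (\<lambda>j. j) (\<lambda>j. cK2 j - inverse (cK2 j))"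
    by (simp add: rep_def monomial_mat_diff)
  have coef: "cF2 j + (if N \<le> j then cF2 (j + 1 - N) else 0) = 1 / (q - inverse q) * (cK2 j - inverse (cK2 j))"
    if j: "j < d" for j
  proof (cases "j < N")
    case True
    then show ?thesis using cK2_qbr(1)[OF True] by (simp add: cF2_def)
  next
    case False
    define m where "m = j - N"
    have jm: "j = N + m" and m: "Suc m < N" using False j by (auto simp: m_def)
    show ?thesis unfolding jm cK2_qbr(2) using m by (auto simp: cF2_def algebra_simps)
  qed
  show ?thesis unfolding a b c monomial_mat_add smult_monomial_mat
    by (rule monomial_mat_cong, erule coef) simp
qed

lemma coeff_E1F2: "2 \<le> j \<Longrightarrow> j < N \<Longrightarrow> cE1 (j + N - 1) * cF2 j = cF2 (j - 1) * cE1 j"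
proof -
  assume j: "2 \<le> j" "j < N"
  have e: "int (j - 1) = int j - 1" using j by simp
  have s2: "qbr q (lam1 * inverse q) (2 - int j) = qbr q lam1 (1 - int j)"
    by (intro qbr_lam1_inverse_q) simp
  have i1: "\<not> j + N - 1 < N" "j + N - 1 - N = j - 1" "j + N - Suc 0 - N = j - 1" "\<not> j + N - Suc 0 < N" using j by auto
  have g: "qbr q 1 (int j - 1) * qbr q lam2 (int j) - qbr q 1 (int j) * qbr q lam2 (int j - 1) = - qbr q lam2 0"
    by (rule qint_qbr_exchange[OF q_nonzero lam2_nonzero q_square])
  then have g': "qbr q 1 (int j - 1) * qbr q lam2 (int j) = qbr q 1 (int j) * qbr q lam2 (int j - 1)" using bottom_vanishes by simp
  have "cE1 (j + N - 1) * cF2 j = qbr q 1 (int j - 1) * qbr q lam2 (int j) * qbr q lam1 (1 - int j)"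
    using j i1 s2 by (simp add: cE1_def cF2_def e)
  also have "\<dots> = cF2 (j - 1) * cE1 j" using j by (simp add: g' cE1_def cF2_def e)
  finally show ?thesis .
qed

lemma rel_E1F2: "rep E1 * rep F2 = rep F2 * rep E1"
proof -
  have a: "rep E1 * rep F2 = monomial_mat d d (\<lambda>j. j + N - 2) (\<lambda>j. if 2 \<le> j \<and> j < N then cF2 (j - 1) * cE1 j else 0)"
    unfolding rep_def gen.case monomial_mat_mult
  proof (rule monomial_mat_cong)
    fix j assume "j < d"
    moreover have "j = 0 \<or> j = 1 \<or> N \<le> j \<or> 2 \<le> j \<and> j < N" by auto
    ultimately show "(if j + N - 1 < d then cE1 (j + N - 1) * cF2 j else 0) =
        (if 2 \<le> j \<and> j < N then cF2 (j - 1) * cE1 j else 0)"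
      using coeff_E1F2[of j] cF2_0 cE1_N by (auto simp: cF2_def)
  qed simp
  have b: "rep F2 * rep E1 = monomial_mat d d (\<lambda>j. j + N - 2) (\<lambda>j. if 2 \<le> j \<and> j < N then cF2 (j - 1) * cE1 j else 0)"
    unfolding rep_def gen.case monomial_mat_mult
  proof (rule monomial_mat_cong)
    fix j assume "j < d"
    moreover have "j = 0 \<or> j = 1 \<or> j = N \<or> N < j \<or> 2 \<le> j \<and> j < N" by auto
    ultimately show "(if j - 1 < d then cF2 (j - 1) * cE1 j else 0) =
        (if 2 \<le> j \<and> j < N then cF2 (j - 1) * cE1 j else 0)"
      using cF2_0 cE1_N cE1_0 by (auto simp: cF2_def)
  next
    fix j assume "(if j - 1 < d then cF2 (j - 1) * cE1 j else 0) \<noteq> 0"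
    then have "cE1 j \<noteq> 0" by (auto split: if_splits)
    then have "j \<noteq> 0" using cE1_0 by metis
    then show "j - 1 + N - 1 = j + N - 2" by simp
  qed
  show ?thesis unfolding a b ..
qed

lemma rel_E2F1: "rep E2 * rep F1 = rep F1 * rep E2"
proof -
  have a: "rep E2 * rep F1 = monomial_mat d d (\<lambda>j. j + 2 - N) (\<lambda>j. if N \<le> j \<and> Suc (Suc (j - N)) < N then 1 else 0)"
    unfolding rep_def gen.case monomial_mat_mult
    by (rule monomial_mat_cong) (auto simp: cE2_def cF1_def split: if_splits)
  have b: "rep F1 * rep E2 = monomial_mat d d (\<lambda>j. j + 2 - N) (\<lambda>j. if N \<le> j \<and> Suc (Suc (j - N)) < N then 1 else 0)"
    unfolding rep_def gen.case monomial_mat_mult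
    by (rule monomial_mat_cong) (auto simp: cE2_def cF1_def split: if_splits)
  show ?thesis unfolding a b ..
qed

lemma rel_E2E2: "rep E2 * rep E2 = 0\<^sub>m d d"
proof -
  have "rep E2 * rep E2 = monomial_mat d d (\<lambda>j. j + 1 - N + 1 - N) (\<lambda>j. 0)"
    unfolding rep_def gen.case monomial_mat_mult
  proof (rule monomial_mat_cong)
    fix j assume "j < d"
    show "(if j + 1 - N < d then cE2 (j + 1 - N) * cE2 j else 0) = 0"
    proof (cases "N \<le> j \<and> j < 2 * N - 1")
      case True
      then have "\<not> N \<le> j + 1 - N" by auto
      then show ?thesis by (simp add: cE2_def)
    qed (simp add: cE2_def)
  qed simp
  then show ?thesis by (simp add: monomial_mat_zero)
qed

lemma rel_F2F2: "rep F2 * rep F2 = 0\<^sub>m d d"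
proof -
  have "rep F2 * rep F2 = monomial_mat d d (\<lambda>j. j + N - 1 + N - 1) (\<lambda>j. 0)"
    unfolding rep_def gen.case monomial_mat_mult
  proof (rule monomial_mat_cong)
    fix j assume "j < d"
    show "(if j + N - 1 < d then cF2 (j + N - 1) * cF2 j else 0) = 0"
      using cF2_0 by (cases j) (auto simp: cF2_def)
  qed simp
  then show ?thesis by (simp add: monomial_mat_zero)
qed

lemma serre_E_qbr_identity:
  fixes m :: int
  shows "(qbr q 1 (m + 1) * qbr q lam1 (1 - (m + 1))) * (qbr q 1 m * qbr q lam1 (1 - m))
    - (q + inverse q) * ((qbr q 1 m * qbr q (lam1 * inverse q) (1 - m)) * (qbr q 1 m * qbr q lam1 (1 - m)))
    + (qbr q 1 m * qbr q (lam1 * inverse q) (1 - m)) * (qbr q 1 (m - 1) * qbr q (lam1 * inverse q) (1 - (m - 1)))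
    = 0"
proof -
  have shift: "qbr q (lam1 * inverse q) (1 - m) = qbr q lam1 (- m)"
    "qbr q (lam1 * inverse q) (1 - (m - 1)) = qbr q lam1 (1 - m)" "qbr q lam1 (1 - (m + 1)) = qbr q lam1 (- m)"
    by (intro qbr_lam1_inverse_q; simp)+ simp
  have "qbr q 1 (m - 1) - (q + inverse q) * qbr q 1 ((m - 1) + 1) + qbr q 1 ((m - 1) + 2) = 0"
    by (rule qbr_three_term[OF q_nonzero one_neq_zero q_square])
  moreover have "(m - 1) + 1 = m" "(m - 1) + 2 = m + 1" by simp_all
  ultimately have three: "qbr q 1 (m - 1) - (q + inverse q) * qbr q 1 m + qbr q 1 (m + 1) = 0"
    by simp
  show ?thesis unfolding shift
    using arg_cong[OF three, of "\<lambda>x. qbr q 1 m * qbr q lam1 (- m) * qbr q lam1 (1 - m) * x"]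
    by (simp add: algebra_simps)
qed

lemma coeff_serre_E:
  assumes j: "j < d"
  shows "(if N \<le> j then cE1 (j + 1 - N) * cE1 (j - N) else 0)
    - (q + inverse q) * (if N < j then cE1 j * cE1 (j - N) else 0)
    + (if N + 2 \<le> j then cE1 j * cE1 (j - 1) else 0) = 0"
proof (cases "N < j")
  case False
  then show ?thesis using cE1_0 by auto
next
  case True
  define m where "m = j - N"
  have jm: "j = N + m" and m: "1 \<le> m" "Suc m < N" using True j by (auto simp: m_def)
  have A: "(if N \<le> j then cE1 (j + 1 - N) * cE1 (j - N) else 0)
      = (qbr q 1 (int m + 1) * qbr q lam1 (1 - (int m + 1))) * (qbr q 1 (int m) * qbr q lam1 (1 - int m))"
    using m by (simp add: jm cE1_def add.commute)
  have B: "(if N < j then cE1 j * cE1 (j - N) else 0)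
      = (qbr q 1 (int m) * qbr q (lam1 * inverse q) (1 - int m)) * (qbr q 1 (int m) * qbr q lam1 (1 - int m))"
    using m by (simp add: jm cE1_def)
  have C: "(if N + 2 \<le> j then cE1 j * cE1 (j - 1) else 0)
      = (qbr q 1 (int m) * qbr q (lam1 * inverse q) (1 - int m))
        * (qbr q 1 (int m - 1) * qbr q (lam1 * inverse q) (1 - (int m - 1)))"
  proof (cases "m = 1")
    case False
    then have "j - 1 = N + (m - 1)" "int (m - 1) = int m - 1" using jm m by auto
    then show ?thesis using m False by (simp add: jm cE1_def)
  qed (simp add: jm)
  show ?thesis unfolding A B C by (rule serre_E_qbr_identity)
qed

lemma rel_serre_E: "rep E1 * rep E1 * rep E2 - (q + inverse q) \<cdot>\<^sub>m (rep E1 * rep E2 * rep E1) + rep E2 * rep E1 * rep E1 = 0\<^sub>m d d"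
proof -
  have a: "rep E1 * rep E1 * rep E2 = monomial_mat d d (\<lambda>j. j - (N + 1)) (\<lambda>j. if N \<le> j then cE1 (j + 1 - N) * cE1 (j - N) else 0)"
    unfolding rep_def gen.case monomial_mat_mult
    by (rule monomial_mat_cong) (auto simp: cE2_def)
  have b: "rep E1 * rep E2 * rep E1 = monomial_mat d d (\<lambda>j. j - (N + 1)) (\<lambda>j. if N < j then cE1 j * cE1 (j - N) else 0)"
    unfolding rep_def gen.case monomial_mat_mult
    by (rule monomial_mat_cong) (auto simp: cE2_def)
  have c: "rep E2 * rep E1 * rep E1 = monomial_mat d d (\<lambda>j. j - (N + 1)) (\<lambda>j. if N + 2 \<le> j then cE1 j * cE1 (j - 1) else 0)"
    unfolding rep_def gen.case monomial_mat_mult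
    by (rule monomial_mat_cong) (auto simp: cE2_def)
  show ?thesis unfolding a b c smult_monomial_mat monomial_mat_diff monomial_mat_add monomial_mat_zero[symmetric, of d d "\<lambda>j. j - (N + 1)"]
    by (rule monomial_mat_cong, erule coeff_serre_E) simp
qed

lemma coeff_serre_F:
  "(if Suc (Suc j) < N then cF2 j else 0) - (q + inverse q) * (if Suc (Suc j) < N then cF2 (Suc j) else 0)
    + (if Suc (Suc j) < N then cF2 (Suc (Suc j)) else 0) = 0"
proof -
  have g: "qbr q lam2 (int j) - (q + inverse q) * qbr q lam2 (int j + 1) + qbr q lam2 (int j + 2) = 0"
    by (rule qbr_three_term[OF q_nonzero lam2_nonzero q_square])
  show ?thesis
  proof (cases "Suc (Suc j) < N")
    case True then show ?thesis using g by (simp add: cF2_def algebra_simps)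
  qed simp
qed

lemma rel_serre_F: "rep F1 * rep F1 * rep F2 - (q + inverse q) \<cdot>\<^sub>m (rep F1 * rep F2 * rep F1) + rep F2 * rep F1 * rep F1 = 0\<^sub>m d d"
proof -
  have a: "rep F1 * rep F1 * rep F2 = monomial_mat d d (\<lambda>j. j + N + 1) (\<lambda>j. if Suc (Suc j) < N then cF2 j else 0)"
    unfolding rep_def gen.case monomial_mat_mult
  proof (rule monomial_mat_cong)
    fix j assume "j < d"
    show "(if j + N - 1 < d then (if Suc (j + N - 1) < d then cF1 (Suc (j + N - 1)) * cF1 (j + N - 1) else 0) * cF2 j else 0)
      = (if Suc (Suc j) < N then cF2 j else 0)"
      using cF2_0 N_pos by (cases j) (auto simp: cF1_def cF2_def)
  qed (use N_pos in auto)
  have b: "rep F1 * rep F2 * rep F1 = monomial_mat d d (\<lambda>j. j + N + 1) (\<lambda>j. if Suc (Suc j) < N then cF2 (Suc j) else 0)"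
    unfolding rep_def gen.case monomial_mat_mult
    by (rule monomial_mat_cong) (use N_pos in \<open>auto simp: cF1_def cF2_def\<close>)
  have c: "rep F2 * rep F1 * rep F1 = monomial_mat d d (\<lambda>j. j + N + 1) (\<lambda>j. if Suc (Suc j) < N then cF2 (Suc (Suc j)) else 0)"
    unfolding rep_def gen.case monomial_mat_mult
    by (rule monomial_mat_cong) (use N_pos in \<open>auto simp: cF1_def cF2_def\<close>)
  show ?thesis unfolding a b c smult_monomial_mat monomial_mat_diff monomial_mat_add monomial_mat_zero[symmetric, of d d "\<lambda>j. j + N + 1"]
    by (rule monomial_mat_cong, rule coeff_serre_F) simp
qed

lemma is_rep_rep: "is_rep q d rep"
  unfolding is_rep_def
  using rep_carrier rel_K_inverse rel_K1K2 rel_K1E1 rel_K2E1 rel_K1E2 rel_K2E2 rel_K1F1 rel_K2F1 rel_K1F2 rel_K2F2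
    rel_E1F1 rel_E2F2 rel_E1F2 rel_E2F1 rel_E2E2 rel_F2F2 rel_serre_E rel_serre_F
  by (simp add: Let_def cartan_def qpow_def)

definition emb :: "complex mat" where "emb = monomial_mat d N (\<lambda>j. j) (\<lambda>j. 1)"

lemma emb_carrier: "emb \<in> carrier_mat d N"
  by (simp add: emb_def)

lemma rep_emb: "g \<in> gplus_gens \<Longrightarrow> rep g * emb = emb * typeA q N \<omega> lam2 g"
  unfolding gplus_gens_def
  by (auto simp: rep_def emb_def typeA_eq_monomial_mat monomial_mat_mult cK1_def cK2_def cE1_def cF1_def
      cE2_def inverse_power_eq_qpow qpow_def intro!: monomial_mat_cong)

context
  assumes no_small_roots: "\<And>m. 0 < m \<Longrightarrow> m < N \<Longrightarrow> q ^ (2 * m) \<noteq> 1"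
begin

lemma weights_separating:
  assumes i: "i < d" "i' < d" "i \<noteq> i'"
  shows "cK1 i \<noteq> cK1 i' \<or> cK2 i \<noteq> cK2 i'"
proof (rule ccontr)
  assume c: "\<not> (cK1 i \<noteq> cK1 i' \<or> cK2 i \<noteq> cK2 i')"
  define pos where "pos k = (if k < N then k else k - N + 1)" for k
  have "cK2 k = lam2 * q ^ pos k" for k by (simp add: cK2_def pos_def)
  then have "q ^ pos i = q ^ pos i'" using c lam2_nonzero by simp
  moreover have "pos i \<le> N - 1" "pos i' \<le> N - 1" using i by (auto simp: pos_def)
  moreover have "\<And>m. 0 < m \<Longrightarrow> m \<le> N - 1 \<Longrightarrow> q ^ (2 * m) \<noteq> 1" using no_small_roots by simp
  ultimately have "pos i = pos i'" using power_eq_power_imp_eq[OF _ q_nonzero] by blast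
  then have "\<exists>k. 1 \<le> k \<and> k < N \<and> {i, i'} = {k, N + k - 1}" using i by (auto simp: pos_def split: if_splits)
  moreover have "cK1 (N + k - 1) = cK1 k * q" if "1 \<le> k" "k < N" for k
    using that q_nonzero by (cases k) (simp_all add: cK1_def field_simps)
  ultimately obtain k where "cK1 k * q = cK1 k * 1" using c by (auto simp: doubleton_eq_iff)
  then have "q = 1" using cK1_nonzero by (metis mult_left_cancel)
  then show False using q_square by simp
qed

lemma cF2_nonzero: "1 \<le> p \<Longrightarrow> p < N \<Longrightarrow> cF2 p \<noteq> 0"
  using qbr_nonzero_if_qbr_zero[OF q_nonzero lam2_nonzero q_square bottom_vanishes no_small_roots[of p], of "int p"]
  by (simp add: cF2_def)

lemma cE1_nonzero:
  "1 \<le> p \<Longrightarrow> p < N \<Longrightarrow> cE1 p \<noteq> 0"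
  "1 \<le> m \<Longrightarrow> Suc m < N \<Longrightarrow> cE1 (N + m) \<noteq> 0"
  using qbr_nonzero_if_qbr_zero[OF q_nonzero one_neq_zero q_square qbr_one_zero no_small_roots[of p], of "int p"]
    qbr_nonzero_if_qbr_zero[OF q_nonzero lam1_nonzero q_square qbr_lam1_vanishes no_small_roots[of "N - p"],
      of "1 - int p"]
    qbr_nonzero_if_qbr_zero[OF q_nonzero one_neq_zero q_square qbr_one_zero no_small_roots[of m], of "int m"]
    qbr_nonzero_if_qbr_zero[OF q_nonzero lam1_nonzero q_square qbr_lam1_vanishes no_small_roots[of "N - 1 - m"],
      of "- int m"]
    qbr_lam1_inverse_q[of "- int m" "1 - int m"]
  by (simp_all add: cE1_def)

lemma submodule_eq_carrier_vec_if_unit_vec: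
  assumes sub: "submodule d rep W" and i: "i < d" "unit_vec d i \<in> W"
  shows "W = carrier_vec d"
proof -
  have E1: "rep E1 = monomial_mat d d (\<lambda>i. i - 1) cE1" and F1: "rep F1 = monomial_mat d d Suc cF1"
    and E2: "rep E2 = monomial_mat d d (\<lambda>i. i + 1 - N) cE2" and F2: "rep F2 = monomial_mat d d (\<lambda>i. i + N - 1) cF2"
    by (simp_all add: rep_def)
  obtain p0 where p0: "p0 < N" "unit_vec d p0 \<in> W"
  proof (cases "i < N")
    case False
    define m0 where "m0 = i - N"
    have m0: "i = N + m0" "Suc m0 < N" using False i by (auto simp: m0_def)
    have "unit_vec d (N + (m0 - m0)) \<in> W"
    proof (rule submodule_unit_vec_walk[OF sub E1, of m0 "\<lambda>k. N + (m0 - k)"])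
      fix k assume "k < m0"
      then show "N + (m0 - k) - 1 = N + (m0 - Suc k) \<and> N + (m0 - k) < d \<and> N + (m0 - Suc k) < d \<and>
          cE1 (N + (m0 - k)) \<noteq> 0"
        using m0 cE1_nonzero(2)[of "m0 - k"] by auto
    qed (use i m0 in simp)
    then have "unit_vec d ((\<lambda>i. i + 1 - N) N) \<in> W"
      using m0 by (intro submodule_unit_vec_step[OF sub _ E2]) (auto simp: cE2_def)
    then show ?thesis using that[of 1] m0 by simp
  qed (use i in blast)
  have v0: "unit_vec d (p0 - p0) \<in> W"
  proof (rule submodule_unit_vec_walk[OF sub E1, of p0 "\<lambda>k. p0 - k"])
    fix k assume "k < p0"
    then show "p0 - k - 1 = p0 - Suc k \<and> p0 - k < d \<and> p0 - Suc k < d \<and> cE1 (p0 - k) \<noteq> 0"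
      using p0 cE1_nonzero(1)[of "p0 - k"] by auto
  qed (use p0 in simp)
  have v: "unit_vec d p \<in> W" if "p < N" for p
  proof (rule submodule_unit_vec_walk[OF sub F1, of p "\<lambda>k. k"])
    fix k assume "k < p"
    with that show "Suc k = Suc k \<and> k < d \<and> Suc k < d \<and> cF1 k \<noteq> 0" by (auto simp: cF1_def)
  qed (use v0 in simp)
  have y: "unit_vec d (p + N - 1) \<in> W" if "1 \<le> p" "p < N" for p
    using submodule_unit_vec_step[OF sub v[of p] F2] that cF2_nonzero[of p] by auto
  show ?thesis
  proof (rule submodule_eq_carrier_vec_if_unit_vecs[OF sub])
    fix k assume "k < d"
    then show "unit_vec d k \<in> W" using v y[of "k - N + 1"] by (cases "k < N") auto
  qed
qed

lemma simple_module_rep: "simple_module d rep"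
proof (rule simple_moduleI[of d rep cK1 cK2])
  show "\<And>W i. submodule d rep W \<Longrightarrow> i < d \<Longrightarrow> unit_vec d i \<in> W \<Longrightarrow> W = carrier_vec d"
    by (rule submodule_eq_carrier_vec_if_unit_vec)
  show "\<And>i i'. i < d \<Longrightarrow> i' < d \<Longrightarrow> i \<noteq> i' \<Longrightarrow> cK1 i \<noteq> cK1 i' \<or> cK2 i \<noteq> cK2 i'"
    by (rule weights_separating)
qed (use N_pos in \<open>simp_all add: rep_def\<close>)

lemma induced_module_onto_rep:
  assumes ind: "induced_module q (typeA q N \<omega> lam2) N n r \<iota>"
  shows "\<exists>\<pi>. intertwiner n r d rep \<pi> \<and> (\<lambda>v. \<pi> *\<^sub>v v) ` carrier_vec n = carrier_vec d \<and>
     maximal_proper_submodule n r {v \<in> carrier_vec n. \<pi> *\<^sub>v v = 0\<^sub>v d}"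
proof (rule induced_module_simple_quotient[OF ind is_rep_rep simple_module_rep emb_carrier _ unit_vec_carrier])
  show "\<forall>g\<in>gplus_gens. rep g * emb = emb * typeA q N \<omega> lam2 g" using rep_emb by blast
  show "emb *\<^sub>v unit_vec N 0 \<noteq> 0\<^sub>v d"
    unfolding emb_def using N_pos by (intro monomial_mat_mult_unit_vec_nonzero) auto
qed

end

end

theorem mainTheorem6:
  fixes q \<omega> lam2 :: complex and N d :: nat and r :: "gen \<Rightarrow> complex mat" and \<iota> :: "complex mat"
  assumes root: "\<exists>n>0. q ^ n = 1" and q2: "q ^ 2 \<noteq> 1"
    and N: "1 \<le> N" "N \<le> lprime q"
    and om: "\<omega> = 1 \<or> \<omega> = -1" and lam2: "lam2 \<noteq> 0"
    and ind: "induced_module q (typeA q N \<omega> lam2) N d r \<iota>"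
    and cond: "qbr q lam2 0 * qbr q lam2 (int N) = 0"
  shows "\<exists>W. maximal_proper_submodule d r W \<and>
           (\<exists>dM rM \<pi>. is_rep q dM rM \<and> simple_module dM rM \<and>
              intertwiner d r dM rM \<pi> \<and>
              (\<lambda>v. \<pi> *\<^sub>v v) ` carrier_vec d = carrier_vec dM \<and>
              {v \<in> carrier_vec d. \<pi> *\<^sub>v v = 0\<^sub>v dM} = W \<and>
              (qbr q lam2 0 = 0 \<and> qbr q lam2 (int N) \<noteq> 0 \<longrightarrow> dM = 2 * N - 1) \<and>
              (qbr q lam2 0 \<noteq> 0 \<and> qbr q lam2 (int N) = 0 \<longrightarrow> dM = 2 * N + 1) \<and>
              (qbr q lam2 0 = 0 \<and> qbr q lam2 (int N) = 0 \<longrightarrow>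
                 N = lprime q \<and> dM = 2 * lprime q - 1))"
proof -
  interpret typeA_parameters q \<omega> lam2 N
    using root_of_unity_nonzero[OF root] q2 om lam2 N(1) by unfold_locales
  have no_small_roots: "q ^ (2 * m) \<noteq> 1" if "0 < m" "m < lprime q" for m
    using power_double_ne_one_below_lprime[OF root that] .
  show ?thesis
  proof (cases "qbr q lam2 0 = 0")
    case True
    interpret M: atypical_bottom q \<omega> lam2 N by unfold_locales (fact True)
    have roots: "\<And>m. 0 < m \<Longrightarrow> m < N \<Longrightarrow> q ^ (2 * m) \<noteq> 1"
      using no_small_roots N(2) by simp
    obtain \<pi> where \<pi>: "intertwiner d r M.d M.rep \<pi>" "(\<lambda>v. \<pi> *\<^sub>v v) ` carrier_vec d = carrier_vec M.d"
      "maximal_proper_submodule d r {v \<in> carrier_vec d. \<pi> *\<^sub>v v = 0\<^sub>v M.d}"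
      using M.induced_module_onto_rep[OF roots ind] by blast
    then show ?thesis
      using M.is_rep_rep M.simple_module_rep[OF roots] True both_vanish_imp_N_eq_lprime[OF root N(2) True]
      by (intro exI[of _ "{v \<in> carrier_vec d. \<pi> *\<^sub>v v = 0\<^sub>v M.d}"] exI[of _ M.d] exI[of _ M.rep] exI[of _ \<pi>]
          conjI impI) auto
  next
    case False
    then have top: "qbr q lam2 (int N) = 0" using cond by simp
    interpret M: atypical_top q \<omega> lam2 N by unfold_locales (fact top)
    have "N < lprime q" using top_vanishes_imp_N_less_lprime[OF root N(2) False top] .
    then have roots: "\<And>m. 0 < m \<Longrightarrow> m \<le> N \<Longrightarrow> q ^ (2 * m) \<noteq> 1"
      using no_small_roots by simp
    obtain \<pi> where \<pi>: "intertwiner d r M.d M.rep \<pi>" "(\<lambda>v. \<pi> *\<^sub>v v) ` carrier_vec d = carrier_vec M.d"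
      "maximal_proper_submodule d r {v \<in> carrier_vec d. \<pi> *\<^sub>v v = 0\<^sub>v M.d}"
      using M.induced_module_onto_rep[OF roots ind] by blast
    then show ?thesis
      using M.is_rep_rep M.simple_module_rep[OF roots] False top
      by (intro exI[of _ "{v \<in> carrier_vec d. \<pi> *\<^sub>v v = 0\<^sub>v M.d}"] exI[of _ M.d] exI[of _ M.rep] exI[of _ \<pi>]
          conjI impI) auto
  qed
qed

end
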